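(* Let $\mathbf{\Sigma}$ be a cluster pattern of rank $2$ with coefficients in a semifield $\mathbb{P}$ whose initial seed $\Sigma_{t_0}$ is not coprime. Then $\mathcal{L}_{t_0}=\mathcal{A}=\overline{\mathcal{A}}\subsetneq\mathcal{U}_{t_0}$.
   Context: A semifield is a multiplicative abelian group with a commutative, associative addition $\oplus$ satisfying $(a\oplus b)c=ac\oplus bc$; $\mathbb{Z}\mathbb{P}$ is its group ring and $\mathbb{Q}\mathbb{P}$ the fraction field. A seed with coefficients in $\mathbb{P}$ is $(\mathbf{x},\mathbf{y},B)$ with $\mathbf{x}$ a generating transcendence basis of an ambient field $\mathcal{F}\cong\mathbb{Q}\mathbb{P}(u_1,\dots,u_n)$ over $\mathbb{Q}\mathbb{P}$, $\mathbf{y}\in\mathbb{P}^n$, $B$ an $n\times n$ skew-symmetrizable integer matrix. With $[a]_+=\max(a,0)$ and $\hat y_i=y_i\prod_jx_j^{b_{ji}}$, the mutation $\mu_k$ is: $x'_k=x_k^{-1}\big(\prod_{j}x_j^{[-b_{jk}]_+}\big)\frac{1+\hat y_k}{1\oplus y_k}$, $x'_i=x_i$ ($i\ne k$); $y'_k=y_k^{-1}$, $y'_i=y_iy_k^{[b_{ki}]_+}(1\oplus y_k)^{-b_{ki}}$ ($i\neq k$); $b'_{ij}=-b_{ij}$ if $i=k$ or $j=k$, and $b'_{ij}=b_{ij}+b_{ik}[b_{kj}]_++[-b_{ik}]_+b_{kj}$ otherwise. $\mathbb{T}_n$ is the $n$-regular tree with edges labeled $1,\dots,n$, distinct at each vertex.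 A cluster pattern is $\{\Sigma_t=(\mathbf{x}_t,\mathbf{y}_t,B_t)\}_{t\in\mathbb{T}_n}$ with $\Sigma_{t'}=\mu_k(\Sigma_t)$ whenever $t,t'$ are joined by an edge labeled $k$. The cluster algebra $\mathcal{A}$ is the $\mathbb{Z}\mathbb{P}$-subalgebra of $\mathcal{F}$ generated by all cluster variables $x_{i;t}$; the upper cluster algebra is $\overline{\mathcal{A}}=\bigcap_{t\in\mathbb{T}_n}\mathbb{Z}\mathbb{P}[\mathbf{x}_t^{\pm1}]$. For $t\in\mathbb{T}_n$ let $t_i$ be the vertex $i$-adjacent to $t$; the upper bound is $\mathcal{U}_t=\mathbb{Z}\mathbb{P}[\mathbf{x}_t^{\pm1}]\cap\bigcap_{i=1}^n\mathbb{Z}\mathbb{P}[\mathbf{x}_{t_i}^{\pm1}]$ and the lower bound is $\mathcal{L}_t=\mathbb{Z}\mathbb{P}[\mathbf{x}_t,\mathbf{x}_{t_1},\dots,\mathbf{x}_{t_n}]$. For $k=1,\dots,n$ let $P_{k;t}=\frac{1}{1\oplus y_{k;t}}\big(y_{k;t}\prod_jx_{j;t}^{[b_{jk;t}]_+}+\prod_jx_{j;t}^{[-b_{jk;t}]_+}\big)$; the seed $\Sigma_t$ is coprime if $P_{1;t},\dots,P_{n;t}$ are pairwise coprime in $\mathbb{Z}\mathbb{P}[\mathbf{x}_t]$, i.e. every common factor of two of them lies in $\mathbb{Z}\mathbb{P}^{\times}=\{\pm1\}\mathbb{P}$. *)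

theory Defs
  imports Main
begin

(* The semifield P is modelled as a subset of the ambient field 'f (P \<subseteq> ZP \<subseteq> F),
   with its own addition splus (the semifield addition \<oplus>, NOT the field addition). *)

definition pos :: "int \<Rightarrow> int" where
  "pos a = max a 0"

definition semifield_in :: "'f::field set \<Rightarrow> ('f \<Rightarrow> 'f \<Rightarrow> 'f) \<Rightarrow> bool" where
  "semifield_in P splus \<longleftrightarrow>
     1 \<in> P \<and> 0 \<notin> P \<and>
     (\<forall>a\<in>P. \<forall>b\<in>P. a * b \<in> P) \<and> (\<forall>a\<in>P. inverse a \<in> P) \<and>
     (\<forall>a\<in>P. \<forall>b\<in>P. splus a b \<in> P) \<and>
     (\<forall>a\<in>P. \<forall>b\<in>P. splus a b = splus b a) \<and>
     (\<forall>a\<in>P. \<forall>b\<in>P. \<forall>c\<in>P. splus (splus a b) c = splus a (splus b c)) \<and>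
     (\<forall>a\<in>P. \<forall>b\<in>P. \<forall>c\<in>P. splus a b * c = splus (a * c) (b * c))"

text \<open>The elements of P are linearly independent over the integers, so that the
  subring of 'f generated by P is (isomorphic to) the group ring ZP.\<close>
definition group_ring_embedded :: "'f::field set \<Rightarrow> bool" where
  "group_ring_embedded P \<longleftrightarrow>
     (\<forall>S m. finite S \<longrightarrow> S \<subseteq> P \<longrightarrow> (\<Sum>p\<in>S. of_int (m p) * p) = 0 \<longrightarrow> (\<forall>p\<in>S. m p = 0))"

definition is_subring :: "'f::field set \<Rightarrow> bool" where
  "is_subring R \<longleftrightarrow> 0 \<in> R \<and> 1 \<in> R \<and> (\<forall>a\<in>R. \<forall>b\<in>R. a + b \<in> R \<and> a * b \<in> R) \<and> (\<forall>a\<in>R. - a \<in> R)"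

definition ring_gen :: "'f::field set \<Rightarrow> 'f set" where
  "ring_gen G = \<Inter> {R. is_subring R \<and> G \<subseteq> R}"

definition ZP :: "'f::field set \<Rightarrow> 'f set" where
  "ZP P = ring_gen P"

definition poly_ring :: "'f::field set \<Rightarrow> nat \<Rightarrow> (nat \<Rightarrow> 'f) \<Rightarrow> 'f set" where
  "poly_ring P n x = ring_gen (P \<union> x ` {1..n})"

definition laurent_ring :: "'f::field set \<Rightarrow> nat \<Rightarrow> (nat \<Rightarrow> 'f) \<Rightarrow> 'f set" where
  "laurent_ring P n x = ring_gen (P \<union> x ` {1..n} \<union> (\<lambda>i. inverse (x i)) ` {1..n})"

text \<open>x_1,...,x_n algebraically independent over QP (equivalently: no nonzero polynomial
  with coefficients in ZP vanishes at x).\<close>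
definition alg_indep :: "'f::field set \<Rightarrow> nat \<Rightarrow> (nat \<Rightarrow> 'f) \<Rightarrow> bool" where
  "alg_indep P n x \<longleftrightarrow>
     (\<forall>S c. finite S \<longrightarrow> S \<subseteq> {a :: nat \<Rightarrow> nat. \<forall>i. i \<notin> {1..n} \<longrightarrow> a i = 0} \<longrightarrow>
        (\<forall>a\<in>S. c a \<in> ZP P) \<longrightarrow>
        (\<Sum>a\<in>S. c a * (\<Prod>i\<in>{1..n}. x i ^ a i)) = 0 \<longrightarrow> (\<forall>a\<in>S. c a = 0))"

definition skew_symmetrizable :: "nat \<Rightarrow> (nat \<Rightarrow> nat \<Rightarrow> int) \<Rightarrow> bool" where
  "skew_symmetrizable n B \<longleftrightarrow>
     (\<exists>d :: nat \<Rightarrow> int. (\<forall>i\<in>{1..n}. d i > 0) \<and>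
        (\<forall>i\<in>{1..n}. \<forall>j\<in>{1..n}. d i * B i j = - (d j * B j i)))"

definition is_seed :: "'f::field set \<Rightarrow> nat \<Rightarrow> (nat \<Rightarrow> 'f) \<Rightarrow> (nat \<Rightarrow> 'f) \<Rightarrow> (nat \<Rightarrow> nat \<Rightarrow> int) \<Rightarrow> bool" where
  "is_seed P n x y B \<longleftrightarrow> alg_indep P n x \<and> (\<forall>i\<in>{1..n}. y i \<in> P) \<and> skew_symmetrizable n B"

definition is_mutation ::
  "'f::field set \<Rightarrow> ('f \<Rightarrow> 'f \<Rightarrow> 'f) \<Rightarrow> nat \<Rightarrow> nat \<Rightarrow>
   (nat \<Rightarrow> 'f) \<Rightarrow> (nat \<Rightarrow> 'f) \<Rightarrow> (nat \<Rightarrow> nat \<Rightarrow> int) \<Rightarrow>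
   (nat \<Rightarrow> 'f) \<Rightarrow> (nat \<Rightarrow> 'f) \<Rightarrow> (nat \<Rightarrow> nat \<Rightarrow> int) \<Rightarrow> bool" where
  "is_mutation P splus n k x y B x' y' B' \<longleftrightarrow>
     x' k = inverse (x k) * (\<Prod>j\<in>{1..n}. x j powi pos (- B j k))
              * (1 + y k * (\<Prod>j\<in>{1..n}. x j powi B j k)) / splus 1 (y k) \<and>
     (\<forall>i\<in>{1..n}. i \<noteq> k \<longrightarrow> x' i = x i) \<and>
     y' k = inverse (y k) \<and>
     (\<forall>i\<in>{1..n}. i \<noteq> k \<longrightarrow>
        y' i = y i * y k powi pos (B k i) * splus 1 (y k) powi (- B k i)) \<and>
     (\<forall>i\<in>{1..n}. \<forall>j\<in>{1..n}.
        B' i j = (if i = k \<or> j = k then - B i j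
                  else B i j + B i k * pos (B k j) + pos (- B i k) * B k j))"

text \<open>The 2-regular tree T_2 is the path on the integers: the edge between m and m+1
  carries label 1 if m is even and 2 if m is odd.\<close>
definition lab2 :: "int \<Rightarrow> nat" where
  "lab2 m = (if even m then 1 else 2)"

definition cluster_pattern2 ::
  "'f::field set \<Rightarrow> ('f \<Rightarrow> 'f \<Rightarrow> 'f) \<Rightarrow>
   (int \<Rightarrow> nat \<Rightarrow> 'f) \<Rightarrow> (int \<Rightarrow> nat \<Rightarrow> 'f) \<Rightarrow> (int \<Rightarrow> nat \<Rightarrow> nat \<Rightarrow> int) \<Rightarrow> bool" where
  "cluster_pattern2 P splus X Y B \<longleftrightarrow>
     (\<forall>t. is_seed P 2 (X t) (Y t) (B t)) \<and>
     (\<forall>m. is_mutation P splus 2 (lab2 m) (X m) (Y m) (B m) (X (m+1)) (Y (m+1)) (B (m+1)) \<and>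
          is_mutation P splus 2 (lab2 m) (X (m+1)) (Y (m+1)) (B (m+1)) (X m) (Y m) (B m))"

definition exch_poly :: "('f::field \<Rightarrow> 'f \<Rightarrow> 'f) \<Rightarrow> nat \<Rightarrow> nat \<Rightarrow>
   (nat \<Rightarrow> 'f) \<Rightarrow> (nat \<Rightarrow> 'f) \<Rightarrow> (nat \<Rightarrow> nat \<Rightarrow> int) \<Rightarrow> 'f" where
  "exch_poly splus n k x y B =
     (1 / splus 1 (y k)) * (y k * (\<Prod>j\<in>{1..n}. x j ^ nat (pos (B j k)))
                             + (\<Prod>j\<in>{1..n}. x j ^ nat (pos (- B j k))))"

text \<open>Coprime seed: P_1,...,P_n pairwise coprime in ZP[x], i.e. every common divisor
  (in ZP[x]) of two of them lies in ZP^units = {\<pm>1} P.\<close>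
definition coprime_seed :: "'f::field set \<Rightarrow> ('f \<Rightarrow> 'f \<Rightarrow> 'f) \<Rightarrow> nat \<Rightarrow>
   (nat \<Rightarrow> 'f) \<Rightarrow> (nat \<Rightarrow> 'f) \<Rightarrow> (nat \<Rightarrow> nat \<Rightarrow> int) \<Rightarrow> bool" where
  "coprime_seed P splus n x y B \<longleftrightarrow>
     (\<forall>k\<in>{1..n}. \<forall>l\<in>{1..n}. k \<noteq> l \<longrightarrow>
       (\<forall>d\<in>poly_ring P n x.
          (\<exists>q\<in>poly_ring P n x. exch_poly splus n k x y B = d * q) \<longrightarrow>
          (\<exists>q\<in>poly_ring P n x. exch_poly splus n l x y B = d * q) \<longrightarrow>
          d \<in> P \<union> uminus ` P))"

text \<open>Cluster algebra, upper cluster algebra, upper and lower bounds (rank 2).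
  The neighbours t_1, t_2 of t in T_2 are t - 1 and t + 1.\<close>
definition cluster_alg2 :: "'f::field set \<Rightarrow> (int \<Rightarrow> nat \<Rightarrow> 'f) \<Rightarrow> 'f set" where
  "cluster_alg2 P X = ring_gen (P \<union> {X t i | t i. i \<in> {1..2}})"

definition upper_cluster_alg2 :: "'f::field set \<Rightarrow> (int \<Rightarrow> nat \<Rightarrow> 'f) \<Rightarrow> 'f set" where
  "upper_cluster_alg2 P X = (\<Inter>t. laurent_ring P 2 (X t))"

definition upper_bound2 :: "'f::field set \<Rightarrow> (int \<Rightarrow> nat \<Rightarrow> 'f) \<Rightarrow> int \<Rightarrow> 'f set" where
  "upper_bound2 P X t = laurent_ring P 2 (X t) \<inter> laurent_ring P 2 (X (t - 1)) \<inter> laurent_ring P 2 (X (t + 1))"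

definition lower_bound2 :: "'f::field set \<Rightarrow> (int \<Rightarrow> nat \<Rightarrow> 'f) \<Rightarrow> int \<Rightarrow> 'f set" where
  "lower_bound2 P X t = ring_gen (P \<union> X t ` {1..2} \<union> X (t - 1) ` {1..2} \<union> X (t + 1) ` {1..2})"

end

theory Submission
  imports Defs "HOL-Computational_Algebra.Polynomial"
begin

(* Skew-symmetrizability in rank 2 forces a zero diagonal and off-diagonal entries that vanish
   together. If they do not vanish, each exchange polynomial P_k is a binomial in the other
   variable x_l whose constant term is a unit of ZP, so a common divisor of P_1 in ZP[x_2] and
   P_2 in ZP[x_1] is a constant dividing a unit; since P is torsion free it can be ordered,
   leading terms multiply, and the units of ZP are +-P. Hence a non-coprime initial seed has
   B = 0. Then B stays 0 under mutation, every cluster is made of x_i or x_i' = p_i / x_i with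
   p_i = (1 + y_i) / (1 (+) y_i), and the lower bound and the cluster algebra are both
   generated by x_1, x_2, x_1', x_2'. An element of the four Laurent rings of these seeds has
   Laurent expansions in x_1, x_2 with denominators bounded by a power of p_1 p_2; they coincide,
   and each monomial is a monomial in the seed matching its signs, so the upper cluster algebra
   is the same ring. Finally, if p_1 = d q_1 and p_2 = d q_2 with d not a unit, then
   d q_1 q_2 / (x_1 x_2) lies in the Laurent rings of t0 and its neighbours but not in that of
   (x_1', x_2'), where it equals x_1' x_2' / d. *)

section \<open>Subrings and adjunction of one element\<close>

lemma subring_closed:
  assumes "is_subring R"
  shows subring_zero: "0 \<in> R" and subring_one: "1 \<in> R"
    and subring_add: "a \<in> R \<Longrightarrow> b \<in> R \<Longrightarrow> a + b \<in> R"
    and subring_mult: "a \<in> R \<Longrightarrow> b \<in> R \<Longrightarrow> a * b \<in> R"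
    and subring_uminus: "a \<in> R \<Longrightarrow> - a \<in> R"
  using assms unfolding is_subring_def by auto

lemma subring_diff: "is_subring R \<Longrightarrow> a \<in> R \<Longrightarrow> b \<in> R \<Longrightarrow> a - b \<in> R"
  using subring_add[of R a "- b"] subring_uminus[of R b] by simp

lemma subring_power: "is_subring R \<Longrightarrow> a \<in> R \<Longrightarrow> a ^ n \<in> R"
  by (induction n) (auto intro: subring_one subring_mult)

lemma subring_sum: "is_subring R \<Longrightarrow> (\<And>i. i \<in> A \<Longrightarrow> f i \<in> R) \<Longrightarrow> sum f A \<in> R"
  by (induction A rule: infinite_finite_induct) (auto intro: subring_zero subring_add)

lemma ring_gen_subring: "is_subring (ring_gen G)"
  unfolding ring_gen_def is_subring_def by auto

lemma ring_gen_subset: "G \<subseteq> ring_gen G"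
  unfolding ring_gen_def by auto

lemma ring_gen_inc: "a \<in> G \<Longrightarrow> a \<in> ring_gen G"
  using ring_gen_subset by blast

lemma ring_gen_minimal: "G \<subseteq> R \<Longrightarrow> is_subring R \<Longrightarrow> ring_gen G \<subseteq> R"
  unfolding ring_gen_def by auto

lemma ring_gen_mono: "G \<subseteq> H \<Longrightarrow> ring_gen G \<subseteq> ring_gen H"
  by (meson order_trans ring_gen_subset ring_gen_minimal ring_gen_subring)

lemmas ring_gen_closed =
  subring_closed[OF ring_gen_subring] subring_diff[OF ring_gen_subring]
  subring_power[OF ring_gen_subring] subring_sum[OF ring_gen_subring]

lemma ZP_subring: "is_subring (ZP P)"
  unfolding ZP_def by (rule ring_gen_subring)

lemma ZP_superset: "P \<subseteq> ZP P"
  unfolding ZP_def by (rule ring_gen_subset)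

lemma ZP_subset_ring_gen: "P \<subseteq> G \<Longrightarrow> ZP P \<subseteq> ring_gen G"
  unfolding ZP_def by (rule ring_gen_mono)

lemmas ZP_zero [simp] = subring_zero[OF ZP_subring]
  and ZP_one [simp] = subring_one[OF ZP_subring]
  and ZP_add = subring_add[OF ZP_subring]
  and ZP_mult = subring_mult[OF ZP_subring]
  and ZP_uminus = subring_uminus[OF ZP_subring]
  and ZP_diff = subring_diff[OF ZP_subring]
  and ZP_power = subring_power[OF ZP_subring]
  and ZP_sum = subring_sum[OF ZP_subring]

definition adjoin :: "'f::field set \<Rightarrow> 'f \<Rightarrow> 'f set" where
  "adjoin R v = {poly F v | F. \<forall>i. coeff F i \<in> R}"

lemma adjoin_subring:
  assumes R: "is_subring R"
  shows "is_subring (adjoin R v)"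
  unfolding is_subring_def
proof (intro conjI ballI)
  show "0 \<in> adjoin R v"
    unfolding adjoin_def using subring_zero[OF R] by (auto intro!: exI[of _ 0])
  show "1 \<in> adjoin R v"
    unfolding adjoin_def using subring_zero[OF R] subring_one[OF R]
    by (auto intro!: exI[of _ 1] simp: coeff_1)
  fix a b assume "a \<in> adjoin R v" "b \<in> adjoin R v"
  then obtain F G where F: "a = poly F v" "\<forall>i. coeff F i \<in> R"
    and G: "b = poly G v" "\<forall>i. coeff G i \<in> R"
    unfolding adjoin_def by blast
  show "a + b \<in> adjoin R v"
    unfolding adjoin_def using F G subring_add[OF R] by (auto intro!: exI[of _ "F + G"])
  show "a * b \<in> adjoin R v"
    unfolding adjoin_def using F G
    by (auto intro!: exI[of _ "F * G"] subring_sum[OF R] subring_mult[OF R] simp: coeff_mult)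
  show "- a \<in> adjoin R v"
    unfolding adjoin_def using F subring_uminus[OF R] by (auto intro!: exI[of _ "- F"])
qed

lemma ring_gen_insert_subset_adjoin:
  assumes R: "is_subring R" and "G \<subseteq> R"
  shows "ring_gen (G \<union> {v}) \<subseteq> adjoin R v"
proof (rule ring_gen_minimal[OF _ adjoin_subring[OF R]])
  have "r \<in> adjoin R v" if "r \<in> R" for r
    unfolding adjoin_def using that subring_zero[OF R]
    by (auto intro!: exI[of _ "[:r:]"] simp: coeff_pCons split: nat.splits)
  moreover have "v \<in> adjoin R v"
    unfolding adjoin_def using subring_zero[OF R] subring_one[OF R]
    by (auto intro!: exI[of _ "[:0, 1:]"] simp: coeff_pCons split: nat.splits)
  ultimately show "G \<union> {v} \<subseteq> adjoin R v" using assms(2) by blast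
qed

lemma adjoin_subset:
  assumes R': "is_subring R'" and "R \<subseteq> R'" "v \<in> R'"
  shows "adjoin R v \<subseteq> R'"
proof
  fix a assume "a \<in> adjoin R v"
  then obtain F where "a = poly F v" "\<forall>i. coeff F i \<in> R" unfolding adjoin_def by blast
  then show "a \<in> R'"
    unfolding poly_altdef using assms
    by (auto intro!: subring_sum[OF R'] subring_mult[OF R'] subring_power[OF R'])
qed

lemma ring_gen_insert_subset_adjoin_ZP: "ring_gen (P \<union> {v}) \<subseteq> adjoin (ZP P) v"
  by (rule ring_gen_insert_subset_adjoin[OF ZP_subring ZP_superset])

lemma atLeastAtMost_1_2: "{1..2::nat} = {1, 2}"
  by auto

lemma in_1_2: "(1::nat) \<in> {1..2}" "(2::nat) \<in> {1..2}"
  by auto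

lemma image_1_2: "x ` {1..2::nat} = {x 1, x 2}"
  unfolding atLeastAtMost_1_2 by simp

lemma prod_1_2: "(\<Prod>j\<in>{1..2::nat}. f j) = f 1 * f 2"
  unfolding atLeastAtMost_1_2 by simp

lemma poly_ring_2: "poly_ring P 2 x = ring_gen (P \<union> {x 1, x 2})"
  unfolding poly_ring_def image_1_2 ..

lemma poly_ring_2_subset_adjoin:
  assumes "{v, w} = {x 1, x 2}"
  shows "poly_ring P 2 x \<subseteq> adjoin (ring_gen (P \<union> {w})) v"
proof -
  have "poly_ring P 2 x = ring_gen ((P \<union> {w}) \<union> {v})"
    unfolding poly_ring_2 assms[symmetric] by (simp add: insert_commute)
  then show ?thesis
    using ring_gen_insert_subset_adjoin[OF ring_gen_subring ring_gen_subset] by simp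
qed

lemma poly_eq_sum_atMost:
  fixes v :: "'a::comm_semiring_1"
  assumes "degree F \<le> N"
  shows "poly F v = (\<Sum>i\<le>N. coeff F i * v ^ i)"
  unfolding poly_altdef[of F v] using assms
  by (intro sum.mono_neutral_left) (auto simp: coeff_eq_0)

section \<open>Two algebraically independent elements\<close>

definition alg_indep_pair :: "'f::field set \<Rightarrow> 'f \<Rightarrow> 'f \<Rightarrow> bool" where
  "alg_indep_pair P v w \<longleftrightarrow>
     (\<forall>N c. (\<forall>i j. c i j \<in> ZP P) \<longrightarrow> (\<Sum>i\<le>N. \<Sum>j\<le>N. c i j * (v ^ i * w ^ j)) = 0 \<longrightarrow>
        (\<forall>i\<le>N. \<forall>j\<le>N. c i j = 0))"

lemma alg_indep_pairD:
  assumes "alg_indep_pair P v w" "\<And>i j. c i j \<in> ZP P"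
    "(\<Sum>i\<le>N. \<Sum>j\<le>N. c i j * (v ^ i * w ^ j)) = 0" "i \<le> N" "j \<le> N"
  shows "c i j = 0"
proof -
  have "(\<forall>i j. c i j \<in> ZP P) \<longrightarrow> (\<Sum>i\<le>N. \<Sum>j\<le>N. c i j * (v ^ i * w ^ j)) = 0 \<longrightarrow>
      (\<forall>i\<le>N. \<forall>j\<le>N. c i j = 0)"
    using assms(1) unfolding alg_indep_pair_def by (rule spec[of _ c, OF spec[of _ N]])
  then show ?thesis
    using assms(2-5) by blast
qed

lemma alg_indep_imp_alg_indep_pair:
  assumes indep: "alg_indep P 2 x"
  shows "alg_indep_pair P (x 1) (x 2)"
  unfolding alg_indep_pair_def
proof (intro allI impI)
  fix N and c :: "nat \<Rightarrow> nat \<Rightarrow> 'a" and i j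
  assume cZ: "\<forall>i j. c i j \<in> ZP P"
    and vanish: "(\<Sum>i\<le>N. \<Sum>j\<le>N. c i j * (x 1 ^ i * x 2 ^ j)) = 0" and "i \<le> N" "j \<le> N"
  define exps where "exps g = (\<lambda>k::nat. if k = 1 then fst g else if k = 2 then snd g else 0)"
    for g :: "nat \<times> nat"
  have exps_1_2: "exps g 1 = fst g" "exps g 2 = snd g" for g
    unfolding exps_def by auto
  have inj: "inj_on exps ({..N} \<times> {..N})"
    by (rule inj_onI) (metis exps_1_2 prod_eq_iff)
  define S where "S = exps ` ({..N} \<times> {..N})"
  define d where "d a = c (a 1) (a 2)" for a :: "nat \<Rightarrow> nat"
  have "(\<Sum>a\<in>S. d a * (\<Prod>k\<in>{1..2}. x k ^ a k)) = (\<Sum>i\<le>N. \<Sum>j\<le>N. c i j * (x 1 ^ i * x 2 ^ j))"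
    unfolding S_def sum.reindex[OF inj] prod_1_2 d_def comp_def exps_1_2 sum.cartesian_product
    by (simp add: case_prod_beta)
  moreover have "S \<subseteq> {a. \<forall>k. k \<notin> {1..2} \<longrightarrow> a k = 0}"
    unfolding S_def exps_def by auto
  moreover have "exps (i, j) \<in> S"
    unfolding S_def using \<open>i \<le> N\<close> \<open>j \<le> N\<close> by blast
  ultimately have "d (exps (i, j)) = 0"
    using indep[unfolded alg_indep_def, rule_format, of S d] cZ vanish unfolding S_def d_def by simp
  then show "c i j = 0"
    unfolding d_def exps_1_2 by simp
qed

lemma alg_indep_pair_swap:
  assumes indep: "alg_indep_pair P v w"
  shows "alg_indep_pair P w v"
  unfolding alg_indep_pair_def
proof (intro allI impI)
  fix N and c :: "nat \<Rightarrow> nat \<Rightarrow> 'a" and i j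
  assume cZ: "\<forall>i j. c i j \<in> ZP P" and vanish: "(\<Sum>i\<le>N. \<Sum>j\<le>N. c i j * (w ^ i * v ^ j)) = 0"
    and "i \<le> N" "j \<le> N"
  have "(\<Sum>j\<le>N. \<Sum>i\<le>N. c i j * (v ^ j * w ^ i)) = 0"
    using vanish by (subst sum.swap) (simp add: mult.commute)
  from alg_indep_pairD[OF indep _ this \<open>j \<le> N\<close> \<open>i \<le> N\<close>] cZ show "c i j = 0"
    by blast
qed

lemma alg_indep_pair_nonzero:
  fixes v w :: "'f::field"
  assumes indep: "alg_indep_pair P v w"
  shows "v \<noteq> 0"
proof
  assume "v = 0"
  define c :: "nat \<Rightarrow> nat \<Rightarrow> 'f" where "c i j = (if i = 1 \<and> j = 0 then 1 else 0)" for i j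
  have "(\<Sum>i\<le>1. \<Sum>j\<le>1. c i j * (v ^ i * w ^ j)) = 0"
    using \<open>v = 0\<close> by (simp add: c_def)
  moreover have "\<forall>i j. c i j \<in> ZP P"
    unfolding c_def by simp
  ultimately have "c 1 0 = 0"
    using alg_indep_pairD[OF indep, where c = c and N = 1 and i = 1 and j = 0] by simp
  then show False
    unfolding c_def by simp
qed

lemma alg_indep_nonzero:
  assumes "alg_indep P 2 x"
  shows "x 1 \<noteq> 0" "x 2 \<noteq> 0"
  using alg_indep_imp_alg_indep_pair[OF assms] alg_indep_pair_swap alg_indep_pair_nonzero by blast+

definition transcendental_over :: "'f::field set \<Rightarrow> 'f \<Rightarrow> bool" where
  "transcendental_over R v \<longleftrightarrow> (\<forall>F. (\<forall>i. coeff F i \<in> R) \<longrightarrow> poly F v = 0 \<longrightarrow> F = 0)"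

lemma transcendental_overD:
  "transcendental_over R v \<Longrightarrow> \<forall>i. coeff F i \<in> R \<Longrightarrow> poly F v = 0 \<Longrightarrow> F = 0"
  unfolding transcendental_over_def by blast

lemma transcendental_over_subset:
  "transcendental_over R v \<Longrightarrow> R' \<subseteq> R \<Longrightarrow> transcendental_over R' v"
  unfolding transcendental_over_def by blast

lemma poly_adjoin_expansion:
  assumes R: "is_subring R" and coeffs: "\<forall>i. coeff F i \<in> adjoin R w"
  obtains N c where "\<forall>i j. c i j \<in> R" "degree F \<le> N"
    "\<forall>i. coeff F i = (\<Sum>j\<le>N. c i j * w ^ j)"
    "poly F v = (\<Sum>i\<le>N. \<Sum>j\<le>N. c i j * (v ^ i * w ^ j))"
proof -
  have "\<forall>i. \<exists>G. coeff F i = poly G w \<and> (\<forall>j. coeff G j \<in> R)"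
    using coeffs unfolding adjoin_def by blast
  then obtain C where C: "\<And>i. coeff F i = poly (C i) w" "\<And>i j. coeff (C i) j \<in> R"
    by (auto dest!: choice)
  define N where "N = degree F + (\<Sum>i\<le>degree F. degree (C i))"
  define c where "c i j = (if i \<le> degree F then coeff (C i) j else 0)" for i j
  have deg_C: "degree (C i) \<le> N" if "i \<le> degree F" for i
  proof -
    have "degree (C i) \<le> (\<Sum>i\<le>degree F. degree (C i))"
      using that by (intro member_le_sum) auto
    then show ?thesis
      unfolding N_def by linarith
  qed
  have coeff_F: "coeff F i = (\<Sum>j\<le>N. c i j * w ^ j)" for i
  proof (cases "i \<le> degree F")
    case True
    then show ?thesis
      unfolding c_def C(1) using deg_C by (simp add: poly_eq_sum_atMost)
  next
    case False
    then show ?thesis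
      unfolding c_def by (simp add: coeff_eq_0)
  qed
  show ?thesis
  proof (rule that)
    show "\<forall>i j. c i j \<in> R"
      unfolding c_def using C(2) subring_zero[OF R] by simp
    show "degree F \<le> N"
      unfolding N_def by simp
    show "\<forall>i. coeff F i = (\<Sum>j\<le>N. c i j * w ^ j)"
      using coeff_F by blast
    have "poly F v = (\<Sum>i\<le>N. coeff F i * v ^ i)"
      by (rule poly_eq_sum_atMost) (simp add: N_def)
    then show "poly F v = (\<Sum>i\<le>N. \<Sum>j\<le>N. c i j * (v ^ i * w ^ j))"
      unfolding coeff_F by (simp add: sum_distrib_left sum_distrib_right mult_ac)
  qed
qed

lemma alg_indep_pair_transcendental:
  assumes indep: "alg_indep_pair P v w"
  shows "transcendental_over (ring_gen (P \<union> {w})) v"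
  unfolding transcendental_over_def
proof (intro allI impI)
  fix F assume "\<forall>i. coeff F i \<in> ring_gen (P \<union> {w})" and root: "poly F v = 0"
  then have "\<forall>i. coeff F i \<in> adjoin (ZP P) w"
    using ring_gen_insert_subset_adjoin_ZP by blast
  then obtain N c where c: "\<forall>i j. c i j \<in> ZP P" "degree F \<le> N"
      "\<forall>i. coeff F i = (\<Sum>j\<le>N. c i j * w ^ j)"
      "poly F v = (\<Sum>i\<le>N. \<Sum>j\<le>N. c i j * (v ^ i * w ^ j))"
    by (rule poly_adjoin_expansion[OF ZP_subring])
  then have "\<forall>i\<le>N. \<forall>j\<le>N. c i j = 0"
    using alg_indep_pairD[OF indep] root by simp
  have "coeff F i = 0" for i
  proof (cases "i \<le> N")
    case True
    then show ?thesis
      using c(3) \<open>\<forall>i\<le>N. \<forall>j\<le>N. c i j = 0\<close> by simp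
  next
    case False
    then show ?thesis
      using c(2) by (simp add: coeff_eq_0)
  qed
  then show "F = 0"
    by (simp add: poly_eq_iff)
qed

lemma alg_indep_transcendental:
  assumes "alg_indep P 2 x"
  shows "transcendental_over (ring_gen (P \<union> {x 2})) (x 1)"
    and "transcendental_over (ring_gen (P \<union> {x 1})) (x 2)"
  using alg_indep_imp_alg_indep_pair[OF assms] alg_indep_pair_swap alg_indep_pair_transcendental by blast+

lemma alg_indep_transcendental_ZP:
  assumes "alg_indep P 2 x"
  shows "transcendental_over (ZP P) (x 1)" "transcendental_over (ZP P) (x 2)"
  using alg_indep_transcendental[OF assms] ZP_subset_ring_gen[of P "P \<union> {x 1}"]
    ZP_subset_ring_gen[of P "P \<union> {x 2}"] by (auto intro: transcendental_over_subset)

lemma transcendental_poly_ZP: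
  assumes tr: "transcendental_over (ZP P) w" and T: "\<forall>i. coeff T i \<in> ZP P" "coeff T 0 \<noteq> 0"
  shows "poly T w \<noteq> 0" "poly T w \<in> ring_gen (P \<union> {w})"
proof -
  show "poly T w \<noteq> 0"
    using transcendental_overD[OF tr T(1)] T(2) by auto
  have "poly T w \<in> adjoin (ZP P) w"
    unfolding adjoin_def using T(1) by blast
  then show "poly T w \<in> ring_gen (P \<union> {w})"
    using adjoin_subset[OF ring_gen_subring ZP_subset_ring_gen ring_gen_inc, of P "P \<union> {w}" w] by blast
qed

lemma coeff_pCons_0_in: "is_subring R \<Longrightarrow> r \<in> R \<Longrightarrow> coeff [:r:] i \<in> R"
  by (cases i) (auto simp: subring_zero)

lemma coeff_mult_in:
  "is_subring R \<Longrightarrow> \<forall>i. coeff A i \<in> R \<Longrightarrow> \<forall>i. coeff B i \<in> R \<Longrightarrow> coeff (A * B) i \<in> R"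
  by (auto simp: coeff_mult intro!: subring_sum subring_mult)

lemma transcendental_factors_in_base:
  assumes R: "is_subring R" and tr: "transcendental_over R v"
    and a: "a \<in> adjoin R v" and b: "b \<in> adjoin R v" and ab: "a * b \<in> R" "a * b \<noteq> 0"
  shows "a \<in> R" "b \<in> R"
proof -
  obtain A where A: "a = poly A v" "\<forall>i. coeff A i \<in> R"
    using a unfolding adjoin_def by blast
  obtain B where B: "b = poly B v" "\<forall>i. coeff B i \<in> R"
    using b unfolding adjoin_def by blast
  have "\<forall>i. coeff (A * B - [:a * b:]) i \<in> R"
    using A(2) B(2) ab(1) R by (simp add: subring_diff coeff_mult_in coeff_pCons_0_in)
  moreover have "poly (A * B - [:a * b:]) v = 0"
    using A(1) B(1) by simp
  ultimately have "A * B - [:a * b:] = 0"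
    by (rule transcendental_overD[OF tr])
  then have AB: "A * B = [:a * b:]"
    by simp
  then have "A \<noteq> 0" "B \<noteq> 0"
    using ab(2) by auto
  then have "degree A = 0" "degree B = 0"
    using AB degree_mult_eq[of A B] by auto
  then have "a = coeff A 0" "b = coeff B 0"
    unfolding A(1) B(1) by (simp_all add: poly_altdef)
  then show "a \<in> R" "b \<in> R"
    using A(2) B(2) by simp_all
qed

lemma transcendental_adjoin_Int:
  assumes R: "is_subring R" and tr: "transcendental_over R v" and "R0 \<subseteq> R"
    and a: "a \<in> adjoin R0 v" "a \<in> R"
  shows "a \<in> R0"
proof -
  obtain A where A: "a = poly A v" "\<forall>i. coeff A i \<in> R0"
    using a unfolding adjoin_def by blast
  have "\<forall>i. coeff (A - [:a:]) i \<in> R"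
    using A(2) a(2) \<open>R0 \<subseteq> R\<close> by (auto intro!: subring_diff[OF R] coeff_pCons_0_in[OF R])
  moreover have "poly (A - [:a:]) v = 0"
    using A(1) by simp
  ultimately have "A - [:a:] = 0"
    by (rule transcendental_overD[OF tr])
  then have "A = [:a:]"
    by simp
  then show ?thesis
    using A(2) by (metis coeff_pCons_0)
qed

lemma ring_gen_Int_ZP:
  assumes indep: "alg_indep P 2 x" and "a \<in> ring_gen (P \<union> {x 1})" "a \<in> ring_gen (P \<union> {x 2})"
  shows "a \<in> ZP P"
  using transcendental_adjoin_Int[OF ring_gen_subring alg_indep_transcendental(1)[OF indep]
      ZP_subset_ring_gen[of P "P \<union> {x 2}"]] assms(2,3) ring_gen_insert_subset_adjoin_ZP
  by blast

lemma poly_ring_2_factors_in_ZP: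
  assumes indep: "alg_indep P 2 x" and ab: "a \<in> poly_ring P 2 x" "b \<in> poly_ring P 2 x"
    "a * b \<in> ZP P" "a * b \<noteq> 0"
  shows "a \<in> ZP P" "b \<in> ZP P"
proof -
  have "ZP P \<subseteq> ring_gen (P \<union> {x 2})"
    by (rule ZP_subset_ring_gen) blast
  then have ab_2: "a * b \<in> ring_gen (P \<union> {x 2})"
    using ab(3) by blast
  have sub: "poly_ring P 2 x \<subseteq> adjoin (ring_gen (P \<union> {x 2})) (x 1)"
    by (rule poly_ring_2_subset_adjoin) simp
  have "a \<in> ring_gen (P \<union> {x 2})" "b \<in> ring_gen (P \<union> {x 2})"
    using transcendental_factors_in_base[OF ring_gen_subring alg_indep_transcendental(1)[OF indep]
        subsetD[OF sub ab(1)] subsetD[OF sub ab(2)] ab_2 ab(4)] by blast+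
  then have "a \<in> adjoin (ZP P) (x 2)" "b \<in> adjoin (ZP P) (x 2)"
    using ring_gen_insert_subset_adjoin_ZP by blast+
  then show "a \<in> ZP P" "b \<in> ZP P"
    using transcendental_factors_in_base[OF ZP_subring alg_indep_transcendental_ZP(2)[OF indep]] ab(3,4)
    by blast+
qed

lemma poly_ring_2_common_divisor:
  assumes indep: "alg_indep P 2 x" and d: "d \<in> poly_ring P 2 x"
    and q1: "q1 \<in> poly_ring P 2 x" "d * q1 \<in> ring_gen (P \<union> {x 2})" "d * q1 \<noteq> 0"
    and q2: "q2 \<in> poly_ring P 2 x" "d * q2 \<in> ring_gen (P \<union> {x 1})" "d * q2 \<noteq> 0"
  shows "d \<in> ZP P" "q1 \<in> ring_gen (P \<union> {x 2})"
proof -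
  have sub1: "poly_ring P 2 x \<subseteq> adjoin (ring_gen (P \<union> {x 2})) (x 1)"
    by (rule poly_ring_2_subset_adjoin) simp
  have sub2: "poly_ring P 2 x \<subseteq> adjoin (ring_gen (P \<union> {x 1})) (x 2)"
    by (rule poly_ring_2_subset_adjoin) auto
  have "d \<in> ring_gen (P \<union> {x 2})" "q1 \<in> ring_gen (P \<union> {x 2})"
    using transcendental_factors_in_base[OF ring_gen_subring alg_indep_transcendental(1)[OF indep]
        subsetD[OF sub1 d] subsetD[OF sub1 q1(1)] q1(2,3)] by blast+
  moreover have "d \<in> ring_gen (P \<union> {x 1})"
    using transcendental_factors_in_base[OF ring_gen_subring alg_indep_transcendental(2)[OF indep]
        subsetD[OF sub2 d] subsetD[OF sub2 q2(1)] q2(2,3)] by blast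
  ultimately show "d \<in> ZP P" "q1 \<in> ring_gen (P \<union> {x 2})"
    using ring_gen_Int_ZP[OF indep] by blast+
qed

section \<open>Laurent polynomials in two variables\<close>

lemma laurent_ring_2:
  "laurent_ring P 2 x = ring_gen (P \<union> {x 1, x 2, inverse (x 1), inverse (x 2)})"
  unfolding laurent_ring_def image_1_2 image_1_2[of "\<lambda>i. inverse (x i)"] by (simp add: insert_commute)

lemma laurent_ring_cong: "x 1 = x' 1 \<Longrightarrow> x 2 = x' 2 \<Longrightarrow> laurent_ring P 2 x = laurent_ring P 2 x'"
  unfolding laurent_ring_2 by simp

lemma laurent_ring_subring: "is_subring (laurent_ring P 2 x)"
  unfolding laurent_ring_def by (rule ring_gen_subring)

lemma ZP_subset_laurent_ring: "ZP P \<subseteq> laurent_ring P 2 x"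
  unfolding laurent_ring_2 by (rule ZP_subset_ring_gen) blast

lemma laurent_ring_gens:
  "x 1 \<in> laurent_ring P 2 x" "x 2 \<in> laurent_ring P 2 x"
  "inverse (x 1) \<in> laurent_ring P 2 x" "inverse (x 2) \<in> laurent_ring P 2 x"
  unfolding laurent_ring_2 by (rule ring_gen_inc; simp)+

lemma laurent_ring_var:
  assumes "i \<in> {1..2}"
  shows "x i \<in> laurent_ring P 2 x" "inverse (x i) \<in> laurent_ring P 2 x"
  using assms laurent_ring_gens[of x P] unfolding atLeastAtMost_1_2 by auto

definition laurent_sum :: "(nat \<Rightarrow> 'f::field) \<Rightarrow> (int \<times> int \<Rightarrow> 'f) \<Rightarrow> (int \<times> int) set \<Rightarrow> 'f" where
  "laurent_sum x c F = (\<Sum>g\<in>F. c g * (x 1 powi fst g * x 2 powi snd g))"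

lemma laurent_sum_singleton: "laurent_sum x c {g} = c g * (x 1 powi fst g * x 2 powi snd g)"
  unfolding laurent_sum_def by simp

lemma laurent_sum_restrict:
  assumes "finite F'" "F \<subseteq> F'"
  shows "laurent_sum x (\<lambda>g. if g \<in> F then c g else 0) F' = laurent_sum x c F"
proof -
  have "laurent_sum x (\<lambda>g. if g \<in> F then c g else 0) F'
      = (\<Sum>g\<in>F'. if g \<in> F then c g * (x 1 powi fst g * x 2 powi snd g) else 0)"
    unfolding laurent_sum_def by (intro sum.cong) auto
  also have "\<dots> = laurent_sum x c F"
    unfolding laurent_sum_def sum.inter_restrict[OF assms(1), symmetric]
    using assms(2) by (simp add: Int_absorb1)
  finally show ?thesis .
qed

lemma laurent_sum_mult:
  assumes nz: "x 1 \<noteq> 0" "x 2 \<noteq> 0" and fin: "finite F1" "finite F2"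
  defines "S \<equiv> (\<lambda>(g, h). (fst g + fst h, snd g + snd h)) ` (F1 \<times> F2)"
  shows "laurent_sum x c1 F1 * laurent_sum x c2 F2
    = laurent_sum x
        (\<lambda>k. \<Sum>(g, h)\<in>{p \<in> F1 \<times> F2. (\<lambda>(g, h). (fst g + fst h, snd g + snd h)) p = k}. c1 g * c2 h) S"
proof -
  define s :: "(int \<times> int) \<times> int \<times> int \<Rightarrow> int \<times> int"
    where "s = (\<lambda>(g, h). (fst g + fst h, snd g + snd h))"
  define m where "m k = x 1 powi fst k * x 2 powi snd k" for k :: "int \<times> int"
  have m_add: "m g * m h = m (s (g, h))" for g h
    unfolding m_def s_def using nz by (simp add: power_int_add mult_ac)
  have "laurent_sum x c1 F1 * laurent_sum x c2 F2 = (\<Sum>(g, h)\<in>F1 \<times> F2. c1 g * c2 h * m (s (g, h)))"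
    unfolding laurent_sum_def sum_product sum.cartesian_product m_def[symmetric] m_add[symmetric]
    by (simp add: mult_ac)
  also have "\<dots> = (\<Sum>k\<in>S. \<Sum>(g, h)\<in>{p \<in> F1 \<times> F2. s p = k}. c1 g * c2 h * m (s (g, h)))"
    unfolding S_def s_def[symmetric] using fin by (intro sum.group[symmetric]) auto
  also have "\<dots> = (\<Sum>k\<in>S. (\<Sum>(g, h)\<in>{p \<in> F1 \<times> F2. s p = k}. c1 g * c2 h) * m k)"
    unfolding sum_distrib_right by (intro sum.cong refl) (auto simp: case_prod_beta)
  finally show ?thesis
    unfolding laurent_sum_def m_def s_def by simp
qed

definition laurent_expansions :: "'f::field set \<Rightarrow> (nat \<Rightarrow> 'f) \<Rightarrow> 'f set" where
  "laurent_expansions P x = {laurent_sum x c F | c F. finite F \<and> (\<forall>g. c g \<in> ZP P)}"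

lemma laurent_expansions_monomial:
  "r \<in> ZP P \<Longrightarrow> r * (x 1 powi a * x 2 powi b) \<in> laurent_expansions P x"
  unfolding laurent_expansions_def using laurent_sum_singleton[of x "\<lambda>_. r" "(a, b)"]
  by (intro CollectI exI[of _ "\<lambda>_. r"] exI[of _ "{(a, b)}"]) simp

lemma laurent_expansions_subring:
  assumes nz: "x 1 \<noteq> 0" "x 2 \<noteq> 0"
  shows "is_subring (laurent_expansions P x)"
  unfolding is_subring_def
proof (intro conjI ballI)
  show "0 \<in> laurent_expansions P x"
    unfolding laurent_expansions_def laurent_sum_def
    by (intro CollectI exI[of _ "\<lambda>_. 0"] exI[of _ "{}"]) simp
  show "1 \<in> laurent_expansions P x"
    using laurent_expansions_monomial[OF ZP_one, of x 0 0] by simp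
  fix a b assume "a \<in> laurent_expansions P x" "b \<in> laurent_expansions P x"
  then obtain c1 F1 c2 F2 where a: "a = laurent_sum x c1 F1" "finite F1" "\<forall>g. c1 g \<in> ZP P"
    and b: "b = laurent_sum x c2 F2" "finite F2" "\<forall>g. c2 g \<in> ZP P"
    unfolding laurent_expansions_def by blast
  define c where "c g = (if g \<in> F1 then c1 g else 0) + (if g \<in> F2 then c2 g else 0)" for g
  have "a + b = laurent_sum x c (F1 \<union> F2)"
    unfolding a b c_def
    by (subst (1 2) laurent_sum_restrict[symmetric, of "F1 \<union> F2"])
      (auto simp: a(2) b(2) laurent_sum_def distrib_right sum.distrib)
  moreover have "\<forall>g. c g \<in> ZP P"
    unfolding c_def using a(3) b(3) by (simp add: ZP_add)
  ultimately show "a + b \<in> laurent_expansions P x"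
    unfolding laurent_expansions_def using a(2) b(2) by blast
  have "(\<Sum>(g, h)\<in>{p \<in> F1 \<times> F2. (\<lambda>(g, h). (fst g + fst h, snd g + snd h)) p = k}. c1 g * c2 h)
      \<in> ZP P" for k
    using a(3) b(3) by (auto intro!: ZP_sum ZP_mult)
  then show "a * b \<in> laurent_expansions P x"
    unfolding laurent_expansions_def a(1) b(1) laurent_sum_mult[OF nz a(2) b(2)] using a(2) b(2) by blast
next
  fix a assume "a \<in> laurent_expansions P x"
  then obtain c F where "a = laurent_sum x c F" "finite F" "\<forall>g. c g \<in> ZP P"
    unfolding laurent_expansions_def by blast
  moreover have "- laurent_sum x c F = laurent_sum x (\<lambda>g. - c g) F"
    unfolding laurent_sum_def by (simp add: sum_negf)
  ultimately show "- a \<in> laurent_expansions P x"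
    unfolding laurent_expansions_def by (auto intro!: ZP_uminus)
qed

lemma laurent_ring_subset_expansions:
  assumes nz: "x 1 \<noteq> 0" "x 2 \<noteq> 0"
  shows "laurent_ring P 2 x \<subseteq> laurent_expansions P x"
proof -
  have "P \<union> {x 1, x 2, inverse (x 1), inverse (x 2)} \<subseteq> laurent_expansions P x"
    using laurent_expansions_monomial[OF ZP_one, of x 1 0] laurent_expansions_monomial[OF ZP_one, of x 0 1]
      laurent_expansions_monomial[OF ZP_one, of x "-1" 0] laurent_expansions_monomial[OF ZP_one, of x 0 "-1"]
      laurent_expansions_monomial[of _ P x 0 0] ZP_superset[of P]
    by (auto simp: power_int_minus)
  then show ?thesis
    unfolding laurent_ring_2 by (rule ring_gen_minimal[OF _ laurent_expansions_subring[OF nz]])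
qed

definition square :: "nat \<Rightarrow> (int \<times> int) set" where
  "square M = {- int M..int M} \<times> {- int M..int M}"

lemma finite_square: "finite (square M)"
  unfolding square_def by simp

lemma square_mono: "N \<le> M \<Longrightarrow> square N \<subseteq> square M"
  unfolding square_def by auto

lemma finite_subset_square:
  assumes "finite F"
  obtains N where "F \<subseteq> square N"
proof -
  define N where "N = nat (\<Sum>g\<in>F. \<bar>fst g\<bar> + \<bar>snd g\<bar>)"
  have "\<bar>fst g\<bar> + \<bar>snd g\<bar> \<le> int N" if "g \<in> F" for g
  proof -
    have "\<bar>fst g\<bar> + \<bar>snd g\<bar> \<le> (\<Sum>g\<in>F. \<bar>fst g\<bar> + \<bar>snd g\<bar>)"
      using assms that by (intro member_le_sum) auto
    then show ?thesis
      unfolding N_def by linarith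
  qed
  then have "F \<subseteq> square N"
    unfolding square_def by (force simp: abs_le_iff)
  then show ?thesis
    by (rule that)
qed

lemma laurent_ring_expansion:
  assumes nz: "x 1 \<noteq> 0" "x 2 \<noteq> 0" and f: "f \<in> laurent_ring P 2 x"
  obtains N where "\<And>M. N \<le> M \<Longrightarrow> \<exists>c. (\<forall>g. c g \<in> ZP P) \<and> f = laurent_sum x c (square M)"
proof -
  obtain c F where F: "finite F" "\<forall>g. c g \<in> ZP P" "f = laurent_sum x c F"
    using subsetD[OF laurent_ring_subset_expansions[OF nz] f] unfolding laurent_expansions_def by blast
  obtain N where "F \<subseteq> square N"
    using finite_subset_square[OF F(1)] .
  have "\<exists>c. (\<forall>g. c g \<in> ZP P) \<and> f = laurent_sum x c (square M)" if "N \<le> M" for M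
  proof (intro exI conjI)
    show "\<forall>g. (if g \<in> F then c g else 0) \<in> ZP P"
      using F(2) by simp
    show "f = laurent_sum x (\<lambda>g. if g \<in> F then c g else 0) (square M)"
      using \<open>F \<subseteq> square N\<close> square_mono[OF that] F(3)
      by (simp add: laurent_sum_restrict finite_square)
  qed
  then show ?thesis
    by (rule that)
qed

lemma sum_square:
  "(\<Sum>g\<in>square M. h g) = (\<Sum>i\<le>2 * M. \<Sum>j\<le>2 * M. h (int i - int M, int j - int M))"
proof -
  have shift: "(\<Sum>a\<in>{- int M..int M}. k a) = (\<Sum>i\<le>2 * M. k (int i - int M))" for k :: "int \<Rightarrow> 'a"
    by (rule sum.reindex_bij_witness[of _ "\<lambda>i. int i - int M" "\<lambda>a. nat (a + int M)"]) auto
  have "(\<Sum>g\<in>square M. h g) = (\<Sum>a\<in>{- int M..int M}. \<Sum>b\<in>{- int M..int M}. h (a, b))"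
    unfolding square_def sum.cartesian_product by simp
  then show ?thesis
    unfolding shift .
qed

lemma power_mult_power_int_diff:
  fixes z :: "'f::field"
  assumes "z \<noteq> 0"
  shows "z ^ M * z powi (int i - int M) = z ^ i"
  using assms by (simp add: power_int_diff)

lemma laurent_sum_square_eq_0D:
  assumes indep: "alg_indep_pair P (x 1) (x 2)" and d: "d \<noteq> 0"
    and dc: "\<forall>g\<in>square M. d * c g \<in> ZP P" and vanish: "laurent_sum x c (square M) = 0"
    and g: "g \<in> square M"
  shows "c g = 0"
proof -
  have nz: "x 1 \<noteq> 0" "x 2 \<noteq> 0"
    using alg_indep_pair_nonzero indep alg_indep_pair_swap by blast+
  define e where "e i j = (if i \<le> 2 * M \<and> j \<le> 2 * M then d * c (int i - int M, int j - int M) else 0)"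
    for i j
  have eZ: "e i j \<in> ZP P" for i j
    unfolding e_def using dc by (auto simp: square_def)
  have monomial: "x 1 ^ i * x 2 ^ j = (x 1 * x 2) ^ M * (x 1 powi (int i - int M) * x 2 powi (int j - int M))"
    for i j
  proof -
    have "(x 1 * x 2) ^ M * (x 1 powi (int i - int M) * x 2 powi (int j - int M))
        = (x 1 ^ M * x 1 powi (int i - int M)) * (x 2 ^ M * x 2 powi (int j - int M))"
      by (simp add: power_mult_distrib mult_ac)
    then show ?thesis
      unfolding power_mult_power_int_diff[OF nz(1)] power_mult_power_int_diff[OF nz(2)] ..
  qed
  have "(\<Sum>i\<le>2 * M. \<Sum>j\<le>2 * M. e i j * (x 1 ^ i * x 2 ^ j)) = d * (x 1 * x 2) ^ M * laurent_sum x c (square M)"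
    unfolding monomial laurent_sum_def sum_square sum_distrib_left e_def
    by (intro sum.cong refl) (simp add: mult_ac)
  then have e_vanish: "(\<Sum>i\<le>2 * M. \<Sum>j\<le>2 * M. e i j * (x 1 ^ i * x 2 ^ j)) = 0"
    using vanish by simp
  define i j where "i = nat (fst g + int M)" and "j = nat (snd g + int M)"
  then have ij: "i \<le> 2 * M" "j \<le> 2 * M" "g = (int i - int M, int j - int M)"
    using g unfolding square_def by auto
  have "e i j = 0"
    by (rule alg_indep_pairD[OF indep eZ e_vanish ij(1,2)])
  then have "d * c g = 0"
    unfolding e_def using ij by simp
  then show ?thesis
    using d by simp
qed

lemma laurent_sum_square_unique:
  assumes indep: "alg_indep_pair P (x 1) (x 2)" and d: "d \<noteq> 0"
    and a: "\<And>g. g \<in> square M \<Longrightarrow> d * a g \<in> ZP P" and b: "\<And>g. g \<in> square M \<Longrightarrow> d * b g \<in> ZP P"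
    and eq: "laurent_sum x a (square M) = laurent_sum x b (square M)" and g: "g \<in> square M"
  shows "a g = b g"
proof -
  have "\<forall>g\<in>square M. d * (a g - b g) \<in> ZP P"
    using a b by (simp add: right_diff_distrib ZP_diff)
  moreover have "laurent_sum x (\<lambda>g. a g - b g) (square M) = 0"
    using eq unfolding laurent_sum_def by (simp add: left_diff_distrib sum_subtractf)
  ultimately have "a g - b g = 0"
    by (rule laurent_sum_square_eq_0D[OF indep d _ _ g])
  then show ?thesis
    by simp
qed

lemma laurent_ring_monomial_quotient:
  assumes indep: "alg_indep_pair P (z 1) (z 2)" and d: "d \<in> ZP P" "d \<noteq> 0"
    and quotient: "inverse d * (z 1 * z 2) \<in> laurent_ring P 2 z"
  shows "\<exists>e\<in>ZP P. d * e = 1"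
proof -
  have nz: "z 1 \<noteq> 0" "z 2 \<noteq> 0"
    using alg_indep_pair_nonzero indep alg_indep_pair_swap by blast+
  obtain N where N: "\<And>M. N \<le> M \<Longrightarrow> \<exists>c. (\<forall>g. c g \<in> ZP P) \<and> inverse d * (z 1 * z 2) = laurent_sum z c (square M)"
    using laurent_ring_expansion[OF nz quotient] by blast
  obtain c where c: "\<forall>g. c g \<in> ZP P" "inverse d * (z 1 * z 2) = laurent_sum z c (square (N + 1))"
    using N[OF le_add1] by blast
  have one_one: "(1, 1) \<in> square (N + 1)"
    unfolding square_def by auto
  define c' where "c' g = c g - (if g = (1, 1) then inverse d else 0)" for g
  have "laurent_sum z c' (square (N + 1)) = laurent_sum z c (square (N + 1)) - inverse d * (z 1 * z 2)"
    using one_one unfolding laurent_sum_def c'_def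
    by (simp add: left_diff_distrib sum_subtractf if_distrib[of "\<lambda>a. a * _"] sum.delta finite_square
        cong: if_cong)
  then have "laurent_sum z c' (square (N + 1)) = 0"
    using c(2) by simp
  moreover have "\<forall>g\<in>square (N + 1). d * c' g \<in> ZP P"
    unfolding c'_def using c(1) d by (auto simp: right_diff_distrib intro!: ZP_diff ZP_mult)
  ultimately have "c' (1, 1) = 0"
    using laurent_sum_square_eq_0D[OF indep d(2)] one_one by blast
  then have "d * c (1, 1) = 1"
    unfolding c'_def using d(2) by simp
  then show ?thesis
    using c(1) by blast
qed

lemma laurent_ring_common_expansion:
  fixes z :: "'i::finite \<Rightarrow> nat \<Rightarrow> 'f::field"
  assumes nz: "\<And>s. z s 1 \<noteq> 0" "\<And>s. z s 2 \<noteq> 0" and f: "\<And>s. f \<in> laurent_ring P 2 (z s)"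
  obtains M c where "\<And>s g. c s g \<in> ZP P" "\<And>s. f = laurent_sum (z s) (c s) (square M)"
proof -
  have "\<forall>s. \<exists>N. \<forall>M\<ge>N. \<exists>c. (\<forall>g. c g \<in> ZP P) \<and> f = laurent_sum (z s) c (square M)"
    using laurent_ring_expansion[OF nz f] by metis
  then obtain N where N: "\<And>s M. N s \<le> M \<Longrightarrow> \<exists>c. (\<forall>g. c g \<in> ZP P) \<and> f = laurent_sum (z s) c (square M)"
    by (auto dest!: choice)
  define M where "M = (\<Sum>s\<in>UNIV. N s)"
  have "N s \<le> M" for s
    unfolding M_def by (rule member_le_sum) auto
  then have "\<forall>s. \<exists>c. (\<forall>g. c g \<in> ZP P) \<and> f = laurent_sum (z s) c (square M)"
    using N by blast
  then obtain c where "\<And>s g. c s g \<in> ZP P" "\<And>s. f = laurent_sum (z s) (c s) (square M)"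
    by (auto dest!: choice)
  then show ?thesis
    by (rule that)
qed

(* The seeds of a rank-2 pattern with zero exchange matrix: flipped s1 s2 p x replaces x i by
   p i / x i exactly for the directions i with s_i. *)
definition flip :: "bool \<Rightarrow> 'f::field \<Rightarrow> 'f \<Rightarrow> 'f" where
  "flip s p z = (if s then p / z else z)"

definition flipped :: "bool \<Rightarrow> bool \<Rightarrow> (nat \<Rightarrow> 'f::field) \<Rightarrow> (nat \<Rightarrow> 'f) \<Rightarrow> nat \<Rightarrow> 'f" where
  "flipped s1 s2 p x i = (if i = 1 then flip s1 (p 1) (x 1) else flip s2 (p 2) (x 2))"

definition sign_flip :: "bool \<Rightarrow> int \<Rightarrow> int" where
  "sign_flip s n = (if s then - n else n)"

definition flip_factor :: "bool \<Rightarrow> 'f::field \<Rightarrow> int \<Rightarrow> 'f" where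
  "flip_factor s p n = (if s then p powi n else 1)"

lemma flipped_1_2 [simp]:
  "flipped s1 s2 p x 1 = flip s1 (p 1) (x 1)" "flipped s1 s2 p x 2 = flip s2 (p 2) (x 2)"
  unfolding flipped_def by simp_all

lemma sign_flip_sign_flip [simp]: "sign_flip s (sign_flip s n) = n"
  unfolding sign_flip_def by simp

lemma flip_power_int: "flip s p z powi n = flip_factor s p n * z powi sign_flip s n"
  unfolding flip_def flip_factor_def sign_flip_def
  by (simp add: divide_inverse power_int_mult_distrib power_int_inverse power_int_minus)

lemma flip_nonzero: "p \<noteq> 0 \<Longrightarrow> z \<noteq> 0 \<Longrightarrow> flip s p z \<noteq> 0"
  unfolding flip_def by simp

definition unflip_coeff :: "bool \<Rightarrow> bool \<Rightarrow> (nat \<Rightarrow> 'f::field) \<Rightarrow> (int \<times> int \<Rightarrow> 'f) \<Rightarrow> int \<times> int \<Rightarrow> 'f"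
  where "unflip_coeff s1 s2 p c h = c (sign_flip s1 (fst h), sign_flip s2 (snd h))
    * flip_factor s1 (p 1) (sign_flip s1 (fst h)) * flip_factor s2 (p 2) (sign_flip s2 (snd h))"

lemma unflip_coeff_monomial:
  "unflip_coeff s1 s2 p c h * (x 1 powi fst h * x 2 powi snd h)
    = c (sign_flip s1 (fst h), sign_flip s2 (snd h))
      * (flip s1 (p 1) (x 1) powi sign_flip s1 (fst h) * flip s2 (p 2) (x 2) powi sign_flip s2 (snd h))"
  unfolding unflip_coeff_def flip_power_int by (simp add: mult_ac)

lemma laurent_sum_flipped:
  "laurent_sum (flipped s1 s2 p x) c (square M) = laurent_sum x (unflip_coeff s1 s2 p c) (square M)"
  unfolding laurent_sum_def flipped_1_2 unflip_coeff_monomial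
  by (rule sum.reindex_bij_witness[of _ "\<lambda>h. (sign_flip s1 (fst h), sign_flip s2 (snd h))"
        "\<lambda>h. (sign_flip s1 (fst h), sign_flip s2 (snd h))"])
    (auto simp: square_def sign_flip_def)

lemma flip_factor_bounded:
  assumes "q \<in> ZP P" "q \<noteq> 0" "\<bar>n\<bar> \<le> int M"
  shows "q ^ M * flip_factor s q n \<in> ZP P"
proof (cases s)
  case True
  have "q ^ nat (n + int M) = q powi (n + int M)"
    using assms(3) by (simp add: power_int_def)
  also have "\<dots> = q ^ M * flip_factor s q n"
    using True assms(2) unfolding flip_factor_def by (simp add: power_int_add mult.commute)
  finally show ?thesis
    using assms(1) by (metis ZP_power)
next
  case False
  then show ?thesis
    unfolding flip_factor_def using assms(1) by (simp add: ZP_power)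
qed

lemma unflip_coeff_bounded:
  assumes c: "\<And>g. c g \<in> ZP P" and p: "p 1 \<in> ZP P" "p 2 \<in> ZP P" "p 1 \<noteq> 0" "p 2 \<noteq> 0"
    and h: "h \<in> square M"
  shows "(p 1 * p 2) ^ M * unflip_coeff s1 s2 p c h \<in> ZP P"
proof -
  have "\<bar>sign_flip s1 (fst h)\<bar> \<le> int M" "\<bar>sign_flip s2 (snd h)\<bar> \<le> int M"
    using h unfolding square_def sign_flip_def by auto
  then have "p 1 ^ M * flip_factor s1 (p 1) (sign_flip s1 (fst h)) \<in> ZP P"
    "p 2 ^ M * flip_factor s2 (p 2) (sign_flip s2 (snd h)) \<in> ZP P"
    using flip_factor_bounded p by blast+
  moreover have "(p 1 * p 2) ^ M * unflip_coeff s1 s2 p c h = c (sign_flip s1 (fst h), sign_flip s2 (snd h))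
      * (p 1 ^ M * flip_factor s1 (p 1) (sign_flip s1 (fst h)))
      * (p 2 ^ M * flip_factor s2 (p 2) (sign_flip s2 (snd h)))"
    unfolding unflip_coeff_def by (simp add: power_mult_distrib mult_ac)
  ultimately show ?thesis
    using c by (simp add: ZP_mult)
qed

lemma laurent_rings_flipped_Inter:
  assumes indep: "alg_indep P 2 x" and p: "p 1 \<in> ZP P" "p 2 \<in> ZP P" "p 1 \<noteq> 0" "p 2 \<noteq> 0"
    and f: "\<And>s1 s2. f \<in> laurent_ring P 2 (flipped s1 s2 p x)"
  shows "f \<in> ring_gen (P \<union> {x 1, x 2, p 1 / x 1, p 2 / x 2})"
proof -
  define G where "G = P \<union> {x 1, x 2, p 1 / x 1, p 2 / x 2}"
  have "flipped s1 s2 p x 1 \<noteq> 0" "flipped s1 s2 p x 2 \<noteq> 0" for s1 s2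
    unfolding flipped_1_2 using alg_indep_nonzero[OF indep] p by (simp_all add: flip_nonzero)
  then obtain M c where c: "\<And>s g. c s g \<in> ZP P"
    "\<And>s. f = laurent_sum (flipped (fst s) (snd s) p x) (c s) (square M)"
    using laurent_ring_common_expansion[where z = "\<lambda>s. flipped (fst s) (snd s) p x"] f by metis
  define a where "a s = unflip_coeff (fst s) (snd s) p (c s)" for s
  have f_a: "f = laurent_sum x (a s) (square M)" for s
    using c(2)[of s] unfolding laurent_sum_flipped a_def .
  have bounded: "(p 1 * p 2) ^ M * a s g \<in> ZP P" if "g \<in> square M" for s g
    unfolding a_def using unflip_coeff_bounded[OF c(1) p that] .
  have a_eq: "a s h = a (False, False) h" if "h \<in> square M" for s h
  proof (rule laurent_sum_square_unique[OF alg_indep_imp_alg_indep_pair[OF indep], where d = "(p 1 * p 2) ^ M"])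
    show "(p 1 * p 2) ^ M \<noteq> 0"
      using p by simp
    show "laurent_sum x (a s) (square M) = laurent_sum x (a (False, False)) (square M)"
      using f_a by simp
  qed (use bounded that in blast)+
  have "a (False, False) h * (x 1 powi fst h * x 2 powi snd h) \<in> ring_gen G" if "h \<in> square M" for h
  proof -
    \<comment> \<open>expand the monomial in the seed whose flips match the signs of the exponents\<close>
    define s1 s2 where "s1 = (fst h < 0)" and "s2 = (snd h < 0)"
    have "flip s1 (p 1) (x 1) \<in> ring_gen G" "flip s2 (p 2) (x 2) \<in> ring_gen G"
      unfolding G_def flip_def by (auto intro: ring_gen_inc)
    moreover have "c (s1, s2) g \<in> ring_gen G" for g
      using c(1) ZP_subset_ring_gen[of P G] unfolding G_def by blast
    ultimately have "c (s1, s2) (sign_flip s1 (fst h), sign_flip s2 (snd h))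
        * (flip s1 (p 1) (x 1) ^ nat (sign_flip s1 (fst h)) * flip s2 (p 2) (x 2) ^ nat (sign_flip s2 (snd h)))
        \<in> ring_gen G"
      by (intro ring_gen_closed)
    moreover have "sign_flip s1 (fst h) \<ge> 0" "sign_flip s2 (snd h) \<ge> 0"
      unfolding s1_def s2_def sign_flip_def by auto
    ultimately show ?thesis
      using a_eq[OF that, of "(s1, s2)"] unflip_coeff_monomial[of s1 s2 p "c (s1, s2)" h x]
      unfolding a_def by (simp add: power_int_def)
  qed
  then show ?thesis
    using f_a[of "(False, False)"] unfolding laurent_sum_def G_def[symmetric]
    by (auto intro: ring_gen_closed)
qed

section \<open>Units of the group ring of a torsion-free group\<close>

lemma sum_int_combination_mult:
  fixes m n :: "'a::comm_ring_1 \<Rightarrow> int"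
  assumes "finite S" "finite T"
  shows "(\<Sum>p\<in>S. of_int (m p) * p) * (\<Sum>q\<in>T. of_int (n q) * q)
    = (\<Sum>r\<in>(\<lambda>(p, q). p * q) ` (S \<times> T).
         of_int (\<Sum>(p, q)\<in>{x \<in> S \<times> T. (\<lambda>(p, q). p * q) x = r}. m p * n q) * r)"
proof -
  define f :: "'a \<times> 'a \<Rightarrow> 'a" where "f = (\<lambda>(p, q). p * q)"
  have "(\<Sum>p\<in>S. of_int (m p) * p) * (\<Sum>q\<in>T. of_int (n q) * q)
      = (\<Sum>(p, q)\<in>S \<times> T. of_int (m p * n q) * f (p, q))"
    unfolding sum_product sum.cartesian_product f_def by (simp add: mult_ac)
  also have "\<dots> = (\<Sum>r\<in>f ` (S \<times> T). \<Sum>(p, q)\<in>{x \<in> S \<times> T. f x = r}. of_int (m p * n q) * f (p, q))"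
    using assms by (intro sum.group[symmetric]) auto
  also have "\<dots> = (\<Sum>r\<in>f ` (S \<times> T). of_int (\<Sum>(p, q)\<in>{x \<in> S \<times> T. f x = r}. m p * n q) * r)"
    unfolding of_int_sum sum_distrib_right by (intro sum.cong refl) (auto simp: case_prod_beta)
  finally show ?thesis
    unfolding f_def .
qed

definition cone_less :: "'f::field set \<Rightarrow> 'f \<Rightarrow> 'f \<Rightarrow> bool" where
  "cone_less C a b \<longleftrightarrow> b * inverse a \<in> C"

lemma cone_less_inverse_cone: "cone_less (inverse ` C) a b \<longleftrightarrow> cone_less C b a"
proof -
  have "b * inverse a \<in> inverse ` C \<longleftrightarrow> inverse (b * inverse a) \<in> C"
    by (metis image_eqI image_iff inverse_inverse_eq)
  then show ?thesis
    unfolding cone_less_def by (simp add: inverse_mult_distrib mult.commute)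
qed

locale torsion_free_subgroup =
  fixes P :: "'f::field set"
  assumes one_mem [simp]: "1 \<in> P" and zero_not_mem [simp]: "0 \<notin> P"
    and mult_mem: "a \<in> P \<Longrightarrow> b \<in> P \<Longrightarrow> a * b \<in> P"
    and inverse_mem: "a \<in> P \<Longrightarrow> inverse a \<in> P"
    and torsion_free: "p \<in> P \<Longrightarrow> p ^ n = 1 \<Longrightarrow> 0 < n \<Longrightarrow> p = 1"
begin

lemma nonzero: "p \<in> P \<Longrightarrow> p \<noteq> 0"
  using zero_not_mem by blast

lemma power_mem: "a \<in> P \<Longrightarrow> a ^ n \<in> P"
  by (induction n) (auto intro: mult_mem)

definition cone :: "'f set \<Rightarrow> bool" where
  "cone C \<longleftrightarrow> C \<subseteq> P \<and> (\<forall>a\<in>C. \<forall>b\<in>C. a * b \<in> C) \<and> 1 \<notin> C"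

(* The elements greater than 1 in a total order of P compatible with multiplication. *)
definition ordering_cone :: "'f set \<Rightarrow> bool" where
  "ordering_cone C \<longleftrightarrow> cone C \<and> (\<forall>g\<in>P. g \<noteq> 1 \<longrightarrow> g \<in> C \<or> inverse g \<in> C)"

lemma cone_power: "cone C \<Longrightarrow> c \<in> C \<Longrightarrow> 0 < k \<Longrightarrow> c ^ k \<in> C"
proof (induction k)
  case (Suc k)
  then show ?case
    unfolding cone_def by (cases k) auto
qed simp

lemma cone_adjoin:
  assumes M: "cone M" and h: "h \<in> P" "h \<noteq> 1" "\<not> (\<exists>k>0. inverse h ^ k \<in> M)"
  shows "cone {h ^ k * c | k c. c \<in> M \<or> (c = 1 \<and> 0 < k)}" (is "cone ?M'")
  unfolding cone_def
proof (intro conjI)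
  show "?M' \<subseteq> P"
    using M h(1) by (auto simp: cone_def intro!: mult_mem power_mem)
  show "\<forall>a\<in>?M'. \<forall>b\<in>?M'. a * b \<in> ?M'"
  proof (intro ballI)
    fix a b assume "a \<in> ?M'" "b \<in> ?M'"
    then obtain k c l d where a: "a = h ^ k * c" "c \<in> M \<or> (c = 1 \<and> 0 < k)"
      and b: "b = h ^ l * d" "d \<in> M \<or> (d = 1 \<and> 0 < l)"
      by blast
    have "a * b = h ^ (k + l) * (c * d)"
      using a(1) b(1) by (simp add: power_add mult_ac)
    moreover have "c * d \<in> M \<or> (c * d = 1 \<and> 0 < k + l)"
      using a(2) b(2) M unfolding cone_def by auto
    ultimately show "a * b \<in> ?M'"
      by blast
  qed
  show "1 \<notin> ?M'"
  proof
    assume "1 \<in> ?M'"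
    then obtain k c where kc: "1 = h ^ k * c" "c \<in> M \<or> (c = 1 \<and> 0 < k)"
      by blast
    show False
    proof (cases "c \<in> M")
      case True
      then have "c = inverse h ^ k"
        using kc(1) nonzero[OF h(1)] by (simp add: field_simps power_inverse)
      moreover have "k \<noteq> 0"
        using True kc(1) M unfolding cone_def by (metis mult_1 power_0)
      ultimately show False
        using True h(3) by blast
    next
      case False
      then show False
        using kc torsion_free[OF h(1)] h(2) by auto
    qed
  qed
qed

lemma maximal_cone_inverse_power:
  assumes M: "cone M" and maximal: "\<And>X. cone X \<Longrightarrow> M \<subseteq> X \<Longrightarrow> X = M"
    and h: "h \<in> P" "h \<noteq> 1" "h \<notin> M"
  shows "\<exists>k>0. inverse h ^ k \<in> M"
proof (rule ccontr)
  assume "\<not> (\<exists>k>0. inverse h ^ k \<in> M)"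
  then have "cone {h ^ k * c | k c. c \<in> M \<or> (c = 1 \<and> 0 < k)}"
    by (rule cone_adjoin[OF M h(1,2)])
  moreover have "M \<subseteq> {h ^ k * c | k c. c \<in> M \<or> (c = 1 \<and> 0 < k)}"
    by (force intro: exI[of _ 0])
  moreover have "h \<in> {h ^ k * c | k c. c \<in> M \<or> (c = 1 \<and> 0 < k)}"
    by (force intro: exI[of _ 1])
  ultimately show False
    using maximal h(3) by blast
qed

lemma ordering_cone_exists: "\<exists>C. ordering_cone C"
proof -
  have "\<Union>\<C> \<in> {C. cone C}" if "\<C> \<in> chains {C. cone C}" for \<C>
  proof -
    have chain: "\<forall>X\<in>\<C>. \<forall>Y\<in>\<C>. X \<subseteq> Y \<or> Y \<subseteq> X" and cones: "\<forall>X\<in>\<C>. cone X"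
      using that unfolding chains_def chain_subset_def by auto
    have "a * b \<in> \<Union>\<C>" if ab: "a \<in> \<Union>\<C>" "b \<in> \<Union>\<C>" for a b
    proof -
      obtain X Y where "X \<in> \<C>" "Y \<in> \<C>" "a \<in> X" "b \<in> Y"
        using ab by blast
      then obtain Z where "Z \<in> \<C>" "a \<in> Z" "b \<in> Z"
        using chain by blast
      then have "a * b \<in> Z"
        using cones unfolding cone_def by blast
      then show ?thesis
        using \<open>Z \<in> \<C>\<close> by blast
    qed
    then show ?thesis
      using cones unfolding cone_def by blast
  qed
  then obtain M where M: "cone M" and maximal: "\<And>X. cone X \<Longrightarrow> M \<subseteq> X \<Longrightarrow> X = M"
    using Zorn_Lemma[of "{C. cone C}"] by blast
  have "g \<in> M \<or> inverse g \<in> M" if g: "g \<in> P" "g \<noteq> 1" for g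
  proof (rule ccontr)
    assume "\<not> (g \<in> M \<or> inverse g \<in> M)"
    then have "g \<notin> M" "inverse g \<notin> M"
      by auto
    obtain k where k: "0 < k" "inverse g ^ k \<in> M"
      using maximal_cone_inverse_power[OF M maximal g \<open>g \<notin> M\<close>] by blast
    obtain l where l: "0 < l" "g ^ l \<in> M"
      using maximal_cone_inverse_power[OF M maximal inverse_mem[OF g(1)] _ \<open>inverse g \<notin> M\<close>] g(2)
      by auto
    have "(inverse g ^ k) ^ l * (g ^ l) ^ k \<in> M"
      using cone_power[OF M k(2) l(1)] cone_power[OF M l(2) k(1)] M unfolding cone_def by blast
    moreover have "(inverse g ^ k) ^ l * (g ^ l) ^ k = 1"
      using nonzero[OF g(1)] by (simp add: power_inverse power_mult[symmetric] mult.commute)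
    ultimately show False
      using M unfolding cone_def by simp
  qed
  then show ?thesis
    using M unfolding ordering_cone_def by blast
qed

lemma ordering_cone_inverse:
  assumes "ordering_cone C"
  shows "ordering_cone (inverse ` C)"
proof -
  have C: "C \<subseteq> P" "\<forall>a\<in>C. \<forall>b\<in>C. a * b \<in> C" "1 \<notin> C" "\<forall>g\<in>P. g \<noteq> 1 \<longrightarrow> g \<in> C \<or> inverse g \<in> C"
    using assms unfolding ordering_cone_def cone_def by auto
  have mem: "g \<in> inverse ` C \<longleftrightarrow> inverse g \<in> C" for g
    by (metis image_eqI image_iff inverse_inverse_eq)
  have "inverse ` C \<subseteq> P"
    using C(1) inverse_mem by blast
  moreover have "\<forall>a\<in>inverse ` C. \<forall>b\<in>inverse ` C. a * b \<in> inverse ` C"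
    using C(2) by (simp add: mem inverse_mult_distrib)
  moreover have "1 \<notin> inverse ` C"
    using C(3) by (simp add: mem)
  moreover have "\<forall>g\<in>P. g \<noteq> 1 \<longrightarrow> g \<in> inverse ` C \<or> inverse g \<in> inverse ` C"
    using C(4) by (auto simp: mem)
  ultimately show ?thesis
    unfolding ordering_cone_def cone_def by blast
qed

definition int_combinations :: "'f set" where
  "int_combinations = {\<Sum>p\<in>S. of_int (m p) * p | S m. finite S \<and> S \<subseteq> P}"

lemma int_combinationsI:
  "finite S \<Longrightarrow> S \<subseteq> P \<Longrightarrow> u = (\<Sum>p\<in>S. of_int (m p) * p) \<Longrightarrow> u \<in> int_combinations"
  unfolding int_combinations_def by blast

lemma int_combinations_subring: "is_subring int_combinations"
  unfolding is_subring_def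
proof (intro conjI ballI)
  show "0 \<in> int_combinations"
    by (rule int_combinationsI[of "{}"]) auto
  show "1 \<in> int_combinations"
    by (rule int_combinationsI[of "{1}" _ "\<lambda>_. 1"]) auto
  fix a b assume "a \<in> int_combinations" "b \<in> int_combinations"
  then obtain S m T n where a: "finite S" "S \<subseteq> P" "a = (\<Sum>p\<in>S. of_int (m p) * p)"
    and b: "finite T" "T \<subseteq> P" "b = (\<Sum>p\<in>T. of_int (n p) * p)"
    unfolding int_combinations_def by blast
  define k where "k p = (if p \<in> S then m p else 0) + (if p \<in> T then n p else 0)" for p
  have restrict: "(\<Sum>p\<in>S \<union> T. of_int (if p \<in> A then c p else 0) * p) = (\<Sum>p\<in>A. of_int (c p) * p)"
    if "A \<subseteq> S \<union> T" for A c
  proof -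
    have "(\<Sum>p\<in>S \<union> T. of_int (if p \<in> A then c p else 0) * p) = (\<Sum>p\<in>S \<union> T. if p \<in> A then of_int (c p) * p else 0)"
      by (intro sum.cong) auto
    also have "\<dots> = (\<Sum>p\<in>A. of_int (c p) * p)"
      using a(1) b(1) that by (simp add: sum.inter_restrict[symmetric] Int_absorb1)
    finally show ?thesis .
  qed
  have "a + b = (\<Sum>p\<in>S \<union> T. of_int (k p) * p)"
    unfolding k_def of_int_add distrib_right sum.distrib restrict[OF Un_upper1] restrict[OF Un_upper2] a b ..
  then show "a + b \<in> int_combinations"
    using a b by (intro int_combinationsI) auto
  show "a * b \<in> int_combinations"
    unfolding a(3) b(3) sum_int_combination_mult[OF a(1) b(1)] using a b mult_mem
    by (intro int_combinationsI[where m = "\<lambda>r. \<Sum>(p, q)\<in>{x \<in> S \<times> T. (\<lambda>(p, q). p * q) x = r}. m p * n q"])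
      auto
next
  fix a assume "a \<in> int_combinations"
  then obtain S m where "finite S" "S \<subseteq> P" "a = (\<Sum>p\<in>S. of_int (m p) * p)"
    unfolding int_combinations_def by blast
  moreover have "- (\<Sum>p\<in>S. of_int (m p) * p) = (\<Sum>p\<in>S. of_int (- m p) * (p::'f))"
    by (simp add: sum_negf)
  ultimately show "- a \<in> int_combinations"
    by (intro int_combinationsI[where m = "\<lambda>p. - m p"]) auto
qed

lemma ZP_int_combination:
  assumes "u \<in> ZP P"
  obtains S m where "finite S" "S \<subseteq> P" "\<forall>p\<in>S. m p \<noteq> 0" "u = (\<Sum>p\<in>S. of_int (m p) * p)"
proof -
  have "P \<subseteq> int_combinations"
    by (auto intro: int_combinationsI[of "{p}" _ "\<lambda>_. 1" for p])
  then have "ZP P \<subseteq> int_combinations"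
    unfolding ZP_def by (rule ring_gen_minimal[OF _ int_combinations_subring])
  then obtain S m where S: "finite S" "S \<subseteq> P" "u = (\<Sum>p\<in>S. of_int (m p) * p)"
    using assms unfolding int_combinations_def by blast
  have "u = (\<Sum>p\<in>{p\<in>S. m p \<noteq> 0}. of_int (m p) * p)"
    unfolding S(3) using S(1) by (intro sum.mono_neutral_right) auto
  then show ?thesis
    using S(1,2) by (intro that[of "{p\<in>S. m p \<noteq> 0}"]) auto
qed

end

locale cone_ordered = torsion_free_subgroup +
  fixes C
  assumes ordering_cone: "ordering_cone C"
begin

lemma cone_less_irrefl: "a \<in> P \<Longrightarrow> \<not> cone_less C a a"
  using ordering_cone nonzero unfolding ordering_cone_def cone_def cone_less_def by simp

lemma cone_less_trans: "b \<in> P \<Longrightarrow> cone_less C a b \<Longrightarrow> cone_less C b c \<Longrightarrow> cone_less C a c"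
proof -
  assume "b \<in> P" "cone_less C a b" "cone_less C b c"
  then have "(c * inverse b) * (b * inverse a) \<in> C"
    using ordering_cone unfolding ordering_cone_def cone_def cone_less_def by blast
  moreover have "(c * inverse b) * (b * inverse a) = c * inverse a"
    using nonzero[OF \<open>b \<in> P\<close>] by (simp add: field_simps)
  ultimately show "cone_less C a c"
    unfolding cone_less_def by simp
qed

lemma cone_less_mult_right: "c \<in> P \<Longrightarrow> cone_less C a b \<Longrightarrow> cone_less C (a * c) (b * c)"
  using nonzero[of c] unfolding cone_less_def by (simp add: field_simps)

lemma cone_less_mult_left: "c \<in> P \<Longrightarrow> cone_less C a b \<Longrightarrow> cone_less C (c * a) (c * b)"
  using cone_less_mult_right[of c a b] by (simp add: mult.commute)

lemma cone_less_total: "a \<in> P \<Longrightarrow> b \<in> P \<Longrightarrow> a \<noteq> b \<Longrightarrow> cone_less C a b \<or> cone_less C b a"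
proof -
  assume ab: "a \<in> P" "b \<in> P" "a \<noteq> b"
  have "b * inverse a \<in> P"
    using ab by (simp add: mult_mem inverse_mem)
  moreover have "b * inverse a \<noteq> 1"
    using ab nonzero[of a] by (auto simp: field_simps)
  ultimately have "b * inverse a \<in> C \<or> inverse (b * inverse a) \<in> C"
    using ordering_cone unfolding ordering_cone_def by blast
  then show ?thesis
    unfolding cone_less_def by (simp add: inverse_mult_distrib mult.commute)
qed

lemma exists_cone_less_max:
  assumes "finite S" "S \<noteq> {}" "S \<subseteq> P"
  shows "\<exists>a\<in>S. \<forall>x\<in>S. x \<noteq> a \<longrightarrow> cone_less C x a"
  using assms
proof (induction S rule: finite_ne_induct)
  case (insert x F)
  then obtain a where a: "a \<in> F" "\<forall>y\<in>F. y \<noteq> a \<longrightarrow> cone_less C y a"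
    by auto
  have "x \<in> P" "a \<in> P" "x \<noteq> a"
    using insert.prems insert.hyps a(1) by auto
  show ?case
  proof (cases "cone_less C a x")
    case True
    have "cone_less C y x" if "y \<in> F" for y
    proof (cases "y = a")
      case False
      then show ?thesis
        using a(2) that True cone_less_trans[OF \<open>a \<in> P\<close>] by blast
    qed (use True in simp)
    then show ?thesis
      by blast
  next
    case False
    then have "cone_less C x a"
      using cone_less_total[OF \<open>x \<in> P\<close> \<open>a \<in> P\<close> \<open>x \<noteq> a\<close>] by blast
    then show ?thesis
      using a by blast
  qed
qed simp

lemma cone_less_max_product_unique:
  assumes ST: "S \<subseteq> P" "T \<subseteq> P" and a: "a \<in> S" "\<forall>x\<in>S. x \<noteq> a \<longrightarrow> cone_less C x a"
    and b: "b \<in> T" "\<forall>y\<in>T. y \<noteq> b \<longrightarrow> cone_less C y b"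
    and pq: "p \<in> S" "q \<in> T" "p * q = a * b"
  shows "p = a \<and> q = b"
proof (rule ccontr)
  assume "\<not> (p = a \<and> q = b)"
  have P: "p \<in> P" "q \<in> P" "a \<in> P" "b \<in> P"
    using ST a(1) b(1) pq(1,2) by auto
  have "cone_less C (p * q) (a * b)"
  proof (cases "p = a")
    case True
    then have "cone_less C q b"
      using \<open>\<not> (p = a \<and> q = b)\<close> b(2) pq(2) by blast
    then show ?thesis
      using True cone_less_mult_left[OF P(3)] by blast
  next
    case False
    then have pq_aq: "cone_less C (p * q) (a * q)"
      using a(2) pq(1) cone_less_mult_right[OF P(2)] by blast
    show ?thesis
    proof (cases "q = b")
      case True
      then show ?thesis
        using pq_aq by simp
    next
      case False
      then have "cone_less C (a * q) (a * b)"
        using b(2) pq(2) cone_less_mult_left[OF P(3)] by blast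
      then show ?thesis
        using pq_aq cone_less_trans mult_mem[OF P(3,2)] by blast
    qed
  qed
  then show False
    using pq(3) cone_less_irrefl mult_mem[OF P(3,4)] by simp
qed

lemma cone_less_max_min_singleton:
  assumes "X \<subseteq> P" "c \<in> X" "\<forall>x\<in>X. x \<noteq> c \<longrightarrow> cone_less C x c"
    and "\<forall>x\<in>X. x \<noteq> c \<longrightarrow> cone_less C c x"
  shows "X = {c}"
proof -
  have "x = c" if "x \<in> X" for x
  proof (rule ccontr)
    assume "x \<noteq> c"
    then have "cone_less C x c" "cone_less C c x"
      using assms(3,4) that by blast+
    then have "cone_less C x x"
      by (rule cone_less_trans[OF subsetD[OF assms(1,2)]])
    then show False
      using cone_less_irrefl assms(1) that by blast
  qed
  then show ?thesis
    using assms(2) by blast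
qed

end

locale torsion_free_group_ring = torsion_free_subgroup +
  assumes group_ring_embedded: "group_ring_embedded P"
begin

lemma int_combination_eq_0D:
  assumes "finite S" "S \<subseteq> P" "(\<Sum>p\<in>S. of_int (m p) * p) = 0" "p \<in> S"
  shows "m p = 0"
proof -
  have "finite S \<longrightarrow> S \<subseteq> P \<longrightarrow> (\<Sum>p\<in>S. of_int (m p) * p) = 0 \<longrightarrow> (\<forall>p\<in>S. m p = 0)"
    using group_ring_embedded unfolding group_ring_embedded_def by (rule spec[of _ m, OF spec[of _ S]])
  then show ?thesis
    using assms by blast
qed

lemma of_int_eq_1_iff: "(of_int k :: 'a) = 1 \<longleftrightarrow> k = 1"
proof
  assume "(of_int k :: 'a) = 1"
  then have "(\<Sum>p\<in>{1}. of_int (k - 1) * (p :: 'a)) = 0"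
    by simp
  then show "k = 1"
    using int_combination_eq_0D[of "{1}" "\<lambda>_. k - 1" 1] by simp
qed simp

lemma int_combination_eq_1D:
  assumes R: "finite R" "R \<subseteq> P" and one: "(\<Sum>r\<in>R. of_int (K r) * r) = 1" and r: "r \<in> R" "r \<noteq> 1"
  shows "K r = 0"
proof -
  define K' where "K' s = (if s \<in> R then K s else 0) - (if s = 1 then 1 else 0)" for s
  have "(\<Sum>s\<in>insert 1 R. of_int (K' s) * s)
      = (\<Sum>s\<in>insert 1 R. if s \<in> R then of_int (K s) * s else 0) - (\<Sum>s\<in>insert 1 R. if s = 1 then 1 else 0)"
    unfolding K'_def sum_subtractf[symmetric] by (intro sum.cong refl) (simp add: left_diff_distrib)
  also have "\<dots> = 0"
    using R one by (simp add: sum.inter_restrict[symmetric] Int_absorb1 subset_insertI)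
  finally have "K' r = 0"
    using R r(1) by (intro int_combination_eq_0D[of "insert 1 R"]) auto
  then show ?thesis
    unfolding K'_def using r by simp
qed

(* The leading term of a product is the product of the leading terms. *)
lemma max_terms_product_eq_1:
  assumes C: "ordering_cone C"
    and S: "finite S" "S \<subseteq> P" "\<forall>p\<in>S. m p \<noteq> 0" and T: "finite T" "T \<subseteq> P" "\<forall>q\<in>T. n q \<noteq> 0"
    and a: "a \<in> S" "\<forall>x\<in>S. x \<noteq> a \<longrightarrow> cone_less C x a"
    and b: "b \<in> T" "\<forall>y\<in>T. y \<noteq> b \<longrightarrow> cone_less C y b"
    and one: "(\<Sum>p\<in>S. of_int (m p) * p) * (\<Sum>q\<in>T. of_int (n q) * q) = 1"
  shows "a * b = 1"
proof (rule ccontr)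
  assume "a * b \<noteq> 1"
  interpret cone_ordered P C
    using C by unfold_locales
  define R where "R = (\<lambda>(p, q). p * q) ` (S \<times> T)"
  define K where "K r = (\<Sum>(p, q)\<in>{x \<in> S \<times> T. (\<lambda>(p, q). p * q) x = r}. m p * n q)" for r
  have "(\<Sum>r\<in>R. of_int (K r) * r) = 1"
    using one unfolding sum_int_combination_mult[OF S(1) T(1)] R_def K_def .
  moreover have "finite R"
    using S(1) T(1) unfolding R_def by simp
  moreover have "R \<subseteq> P"
    using S(2) T(2) unfolding R_def by (auto intro!: mult_mem)
  moreover have "a * b \<in> R"
    unfolding R_def using a(1) b(1) by force
  ultimately have "K (a * b) = 0"
    using int_combination_eq_1D \<open>a * b \<noteq> 1\<close> by blast
  moreover have "{x \<in> S \<times> T. (\<lambda>(p, q). p * q) x = a * b} = {(a, b)}"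
    using cone_less_max_product_unique[OF S(2) T(2) a b] a(1) b(1) by auto
  ultimately have "m a * n b = 0"
    unfolding K_def by simp
  then show False
    using S(3) T(3) a(1) b(1) by simp
qed

lemma int_combination_product_eq_1:
  assumes S: "finite S" "S \<subseteq> P" "\<forall>p\<in>S. m p \<noteq> 0" "S \<noteq> {}"
    and T: "finite T" "T \<subseteq> P" "\<forall>q\<in>T. n q \<noteq> 0" "T \<noteq> {}"
    and one: "(\<Sum>p\<in>S. of_int (m p) * p) * (\<Sum>q\<in>T. of_int (n q) * q) = 1"
  shows "\<exists>a b. S = {a} \<and> T = {b} \<and> a * b = 1"
proof -
  obtain C where C: "ordering_cone C"
    using ordering_cone_exists by blast
  interpret up: cone_ordered P C
    using C by unfold_locales
  interpret down: cone_ordered P "inverse ` C"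
    using ordering_cone_inverse[OF C] by unfold_locales
  obtain a where a: "a \<in> S" "\<forall>x\<in>S. x \<noteq> a \<longrightarrow> cone_less C x a"
    using up.exists_cone_less_max[OF S(1,4,2)] by blast
  obtain b where b: "b \<in> T" "\<forall>y\<in>T. y \<noteq> b \<longrightarrow> cone_less C y b"
    using up.exists_cone_less_max[OF T(1,4,2)] by blast
  obtain a' where a': "a' \<in> S" "\<forall>x\<in>S. x \<noteq> a' \<longrightarrow> cone_less (inverse ` C) x a'"
    using down.exists_cone_less_max[OF S(1,4,2)] by blast
  obtain b' where b': "b' \<in> T" "\<forall>y\<in>T. y \<noteq> b' \<longrightarrow> cone_less (inverse ` C) y b'"
    using down.exists_cone_less_max[OF T(1,4,2)] by blast
  have "a * b = 1"
    by (rule max_terms_product_eq_1[OF C S(1-3) T(1-3) a b one])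
  moreover have "a' * b' = 1"
    by (rule max_terms_product_eq_1[OF ordering_cone_inverse[OF C] S(1-3) T(1-3) a' b' one])
  ultimately have "a' = a" "b' = b"
    using up.cone_less_max_product_unique[OF S(2) T(2) a b a'(1) b'(1)] by auto
  then have "S = {a}" "T = {b}"
    using up.cone_less_max_min_singleton[OF S(2) a] up.cone_less_max_min_singleton[OF T(2) b] a'(2) b'(2)
    unfolding cone_less_inverse_cone by simp_all
  with \<open>a * b = 1\<close> show ?thesis
    by blast
qed

theorem ZP_units:
  assumes u: "u \<in> ZP P" and v: "v \<in> ZP P" and uv: "u * v = 1"
  shows "u \<in> P \<union> uminus ` P"
proof -
  obtain S m where S: "finite S" "S \<subseteq> P" "\<forall>p\<in>S. m p \<noteq> 0" "u = (\<Sum>p\<in>S. of_int (m p) * p)"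
    using ZP_int_combination[OF u] by blast
  obtain T n where T: "finite T" "T \<subseteq> P" "\<forall>q\<in>T. n q \<noteq> 0" "v = (\<Sum>q\<in>T. of_int (n q) * q)"
    using ZP_int_combination[OF v] by blast
  have nonempty: "S \<noteq> {}" "T \<noteq> {}"
    using uv S(4) T(4) by auto
  have "(\<Sum>p\<in>S. of_int (m p) * p) * (\<Sum>q\<in>T. of_int (n q) * q) = 1"
    using uv S(4) T(4) by simp
  then obtain a b where ab: "S = {a}" "T = {b}" "a * b = 1"
    using int_combination_product_eq_1[OF S(1-3) nonempty(1) T(1-3) nonempty(2)] by blast
  then have "of_int (m a * n b) * (a * b) = u * v"
    using S(4) T(4) by (simp add: mult_ac)
  then have "of_int (m a * n b) = (1 :: 'a)"
    using uv ab(3) by simp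
  then have "m a * n b = 1"
    using of_int_eq_1_iff[of "m a * n b"] by simp
  then have "m a = 1 \<or> m a = - 1"
    using zmult_eq_1_iff by blast
  moreover have "u = of_int (m a) * a" "a \<in> P"
    using S(2,4) ab(1) by auto
  ultimately show ?thesis
    by auto
qed

lemma divisor_of_unit_constant_term:
  assumes tr: "transcendental_over (ZP P) w" and d: "d \<in> ZP P" and q: "q \<in> adjoin (ZP P) w"
    and T: "\<forall>i. coeff T i \<in> ZP P" "coeff T 0 \<in> P" and eq: "d * q = poly T w"
  shows "d \<in> P \<union> uminus ` P"
proof -
  obtain Q where Q: "q = poly Q w" "\<forall>i. coeff Q i \<in> ZP P"
    using q unfolding adjoin_def by blast
  have "\<forall>i. coeff (smult d Q - T) i \<in> ZP P"
    using Q(2) T(1) d by (simp add: ZP_diff ZP_mult)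
  moreover have "poly (smult d Q - T) w = 0"
    using eq Q(1) by simp
  ultimately have "smult d Q - T = 0"
    by (rule transcendental_overD[OF tr])
  then have "coeff (smult d Q) 0 = coeff T 0"
    by simp
  then have "d * (coeff Q 0 * inverse (coeff T 0)) = 1"
    using nonzero[OF T(2)] by (simp add: mult.assoc[symmetric])
  moreover have "coeff Q 0 * inverse (coeff T 0) \<in> ZP P"
    using ZP_mult[OF spec[OF Q(2)] subsetD[OF ZP_superset inverse_mem[OF T(2)]]] .
  ultimately show ?thesis
    using ZP_units[OF d] by blast
qed

end

section \<open>Rank two cluster patterns\<close>

lemma lab2_mem: "lab2 m \<in> {1..2}"
  unfolding lab2_def by simp

lemma lab2_cases: "lab2 m = 1 \<and> lab2 (m + 1) = 2 \<or> lab2 m = 2 \<and> lab2 (m + 1) = 1"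
  unfolding lab2_def by simp

lemma skew_symmetrizable_2:
  assumes "skew_symmetrizable 2 Bm"
  shows "Bm 1 1 = 0" "Bm 2 2 = 0" "Bm 1 2 = 0 \<longleftrightarrow> Bm 2 1 = 0"
proof -
  obtain d :: "nat \<Rightarrow> int" where d: "\<forall>i\<in>{1..2}. d i > 0"
    "\<forall>i\<in>{1..2}. \<forall>j\<in>{1..2}. d i * Bm i j = - (d j * Bm j i)"
    using assms unfolding skew_symmetrizable_def by blast
  have "d 1 > 0" "d 2 > 0"
    using d(1) in_1_2 by blast+
  moreover have "d 1 * Bm 1 1 = - (d 1 * Bm 1 1)" "d 2 * Bm 2 2 = - (d 2 * Bm 2 2)"
    "d 1 * Bm 1 2 = - (d 2 * Bm 2 1)"
    using d(2) in_1_2 by blast+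
  ultimately show "Bm 1 1 = 0" "Bm 2 2 = 0" "Bm 1 2 = 0 \<longleftrightarrow> Bm 2 1 = 0"
    by auto
qed

definition exch_const :: "('f::field \<Rightarrow> 'f \<Rightarrow> 'f) \<Rightarrow> 'f \<Rightarrow> 'f" where
  "exch_const splus y = (1 + y) / splus 1 y"

lemma exch_poly_zero_matrix:
  assumes "\<forall>i\<in>{1..2}. \<forall>j\<in>{1..2}. Bm i j = 0" "k \<in> {1..2}"
  shows "exch_poly splus 2 k x y Bm = exch_const splus (y k)"
  using assms unfolding exch_poly_def exch_const_def prod_1_2 pos_def by (simp add: add.commute)

lemma mutation_zero_matrix:
  assumes mutation: "is_mutation P splus 2 k x y Bm x' y' Bm'" and k: "k \<in> {1..2}"
    and zero: "\<forall>i\<in>{1..2}. \<forall>j\<in>{1..2}. Bm i j = 0"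
  shows "x' k = exch_const splus (y k) / x k" "\<forall>i\<in>{1..2}. i \<noteq> k \<longrightarrow> x' i = x i"
    "y' k = inverse (y k)" "\<forall>i\<in>{1..2}. i \<noteq> k \<longrightarrow> y' i = y i"
    "\<forall>i\<in>{1..2}. \<forall>j\<in>{1..2}. Bm' i j = 0"
proof -
  have "Bm 1 k = 0" "Bm 2 k = 0"
    using zero k by auto
  then show "x' k = exch_const splus (y k) / x k"
    using mutation unfolding is_mutation_def exch_const_def prod_1_2 pos_def
    by (simp add: field_simps add.commute)
  show "\<forall>i\<in>{1..2}. i \<noteq> k \<longrightarrow> x' i = x i" "y' k = inverse (y k)"
    using mutation unfolding is_mutation_def by blast+
  show "\<forall>i\<in>{1..2}. i \<noteq> k \<longrightarrow> y' i = y i" "\<forall>i\<in>{1..2}. \<forall>j\<in>{1..2}. Bm' i j = 0"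
    using mutation zero k unfolding is_mutation_def pos_def by simp_all
qed

locale semifield_set =
  fixes P :: "'f::field set" and splus :: "'f \<Rightarrow> 'f \<Rightarrow> 'f"
  assumes semifield: "semifield_in P splus"
begin

lemma semifield_group:
  "1 \<in> P" "0 \<notin> P" "a \<in> P \<Longrightarrow> b \<in> P \<Longrightarrow> a * b \<in> P" "a \<in> P \<Longrightarrow> inverse a \<in> P"
  using semifield unfolding semifield_in_def by blast+

lemma splus_mem: "a \<in> P \<Longrightarrow> b \<in> P \<Longrightarrow> splus a b \<in> P"
  and splus_commute: "a \<in> P \<Longrightarrow> b \<in> P \<Longrightarrow> splus a b = splus b a"
  and splus_assoc: "a \<in> P \<Longrightarrow> b \<in> P \<Longrightarrow> c \<in> P \<Longrightarrow> splus (splus a b) c = splus a (splus b c)"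
  and splus_mult_distrib: "a \<in> P \<Longrightarrow> b \<in> P \<Longrightarrow> c \<in> P \<Longrightarrow> splus a b * c = splus (a * c) (b * c)"
  using semifield unfolding semifield_in_def by blast+

lemma semifield_power: "p \<in> P \<Longrightarrow> p ^ n \<in> P"
  by (induction n) (auto intro: semifield_group)

fun geometric_sum :: "'f \<Rightarrow> nat \<Rightarrow> 'f" where
  "geometric_sum p 0 = 1"
| "geometric_sum p (Suc k) = splus (geometric_sum p k) (p ^ Suc k)"

lemma geometric_sum_mem: "p \<in> P \<Longrightarrow> geometric_sum p k \<in> P"
  by (induction k) (auto intro: semifield_group splus_mem semifield_power simp del: power_Suc)

lemma geometric_sum_Suc_mult:
  assumes p: "p \<in> P"
  shows "geometric_sum p (Suc k) * p = splus (geometric_sum p k * p) (p ^ Suc (Suc k))"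
proof -
  have "geometric_sum p (Suc k) * p = splus (geometric_sum p k * p) (p ^ Suc k * p)"
    using splus_mult_distrib[OF geometric_sum_mem[OF p] semifield_power[OF p] p, of k "Suc k"]
    by (simp only: geometric_sum.simps)
  then show ?thesis
    by (simp only: power_Suc2[symmetric])
qed

lemma geometric_sum_Suc:
  assumes p: "p \<in> P"
  shows "geometric_sum p (Suc k) = splus 1 (geometric_sum p k * p)"
proof (induction k)
  case (Suc k)
  have "geometric_sum p (Suc (Suc k)) = splus (splus 1 (geometric_sum p k * p)) (p ^ Suc (Suc k))"
    using Suc.IH by (simp del: power_Suc)
  also have "\<dots> = splus 1 (splus (geometric_sum p k * p) (p ^ Suc (Suc k)))"
    using semifield_group(1,3) geometric_sum_mem[OF p] semifield_power[OF p] p by (intro splus_assoc) auto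
  also have "\<dots> = splus 1 (geometric_sum p (Suc k) * p)"
    by (simp only: geometric_sum_Suc_mult[OF p])
  finally show ?case .
qed simp

(* If p ^ n = 1, then s = 1 (+) p (+) ... (+) p ^ (n - 1) satisfies s * p = s. *)
lemma semifield_torsion_free:
  assumes p: "p \<in> P" and "p ^ n = 1" "0 < n"
  shows "p = 1"
proof -
  consider "n = 1" | k where "n = Suc (Suc k)"
    using \<open>0 < n\<close> by (metis One_nat_def gr0_implies_Suc not0_implies_Suc)
  then show ?thesis
  proof cases
    case 1
    then show ?thesis
      using \<open>p ^ n = 1\<close> by simp
  next
    case (2 k)
    have "geometric_sum p (Suc k) * p = splus (geometric_sum p k * p) 1"
      using geometric_sum_Suc_mult[OF p, of k] \<open>p ^ n = 1\<close> 2 by simp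
    also have "\<dots> = geometric_sum p (Suc k)"
      using geometric_sum_Suc[OF p] splus_commute semifield_group(1,3) geometric_sum_mem[OF p] p
      by simp
    finally have "geometric_sum p (Suc k) * p = geometric_sum p (Suc k) * 1"
      by simp
    moreover have "geometric_sum p (Suc k) \<noteq> 0"
      using geometric_sum_mem[OF p, of "Suc k"] semifield_group(2) by metis
    ultimately show ?thesis
      by (metis mult_left_cancel)
  qed
qed

sublocale torsion_free_subgroup P
  using semifield_group semifield_torsion_free by unfold_locales blast+

end

locale coefficient_semifield = semifield_set +
  assumes embedded: "group_ring_embedded P"
begin

sublocale torsion_free_group_ring P
  using embedded by unfold_locales

lemma splus_one_mem: "y \<in> P \<Longrightarrow> splus 1 y \<in> P"
  by (simp add: splus_mem)

lemma one_plus_nonzero: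
  assumes "y \<in> P"
  shows "1 + y \<noteq> 0"
proof
  assume "1 + y = 0"
  show False
  proof (cases "y = 1")
    case True
    then have "(\<Sum>p\<in>{1}. of_int 2 * p) = (0 :: 'a)"
      using \<open>1 + y = 0\<close> by simp
    then show False
      using int_combination_eq_0D[of "{1}" "\<lambda>_. 2" 1] by simp
  next
    case False
    then have "(\<Sum>p\<in>{1, y}. of_int 1 * p) = (0 :: 'a)"
      using \<open>1 + y = 0\<close> by simp
    then show False
      using int_combination_eq_0D[of "{1, y}" "\<lambda>_. 1" 1] assms by simp
  qed
qed

lemma exch_const_ZP: "y \<in> P \<Longrightarrow> exch_const splus y \<in> ZP P"
  unfolding exch_const_def divide_inverse
  using ZP_superset[of P] splus_one_mem inverse_mem by (auto intro!: ZP_mult ZP_add)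

lemma exch_const_nonzero: "y \<in> P \<Longrightarrow> exch_const splus y \<noteq> 0"
  unfolding exch_const_def using one_plus_nonzero nonzero[OF splus_one_mem] by simp

lemma exch_const_inverse:
  assumes y: "y \<in> P"
  shows "exch_const splus (inverse y) = exch_const splus y"
proof -
  have "splus 1 (inverse y) = splus y 1 * inverse y"
    using splus_mult_distrib[OF y one_mem inverse_mem[OF y]] nonzero[OF y] by simp
  also have "\<dots> = splus 1 y * inverse y"
    using splus_commute[OF y one_mem] by simp
  finally show ?thesis
    unfolding exch_const_def using nonzero[OF y] nonzero[OF splus_one_mem[OF y]]
    by (simp add: field_simps)
qed

lemma exch_poly_2_binomial:
  assumes y: "y k \<in> P" and kl: "(k = 1 \<and> l = 2) \<or> (k = 2 \<and> l = 1)"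
    and diagonal: "Bm k k = 0" and off_diagonal: "Bm l k \<noteq> 0"
  obtains T where "exch_poly splus 2 k x y Bm = poly T (x l)" "\<forall>i. coeff T i \<in> ZP P" "coeff T 0 \<in> P"
proof -
  define u where "u = 1 / splus 1 (y k)"
  define a b where "a = nat (pos (Bm l k))" and "b = nat (pos (- Bm l k))"
  define T where "T = smult u (monom (y k) a + monom 1 b)"
  have u: "u \<in> P"
    unfolding u_def divide_inverse using inverse_mem splus_one_mem[OF y] by simp
  have "exch_poly splus 2 k x y Bm = poly T (x l)"
    using kl diagonal unfolding exch_poly_def prod_1_2 T_def u_def a_def b_def
    by (auto simp: pos_def poly_monom algebra_simps)
  moreover have "\<forall>i. coeff T i \<in> ZP P"
    unfolding T_def using u y ZP_superset by (auto simp: coeff_monom intro!: ZP_mult ZP_add)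
  moreover have "(a = 0) \<noteq> (b = 0)"
    using off_diagonal unfolding a_def b_def pos_def by auto
  then have "coeff T 0 \<in> P"
    unfolding T_def using u y by (auto simp: coeff_monom intro: mult_mem)
  ultimately show ?thesis
    by (rule that)
qed

lemma coprime_seed_2:
  assumes seed: "is_seed P 2 x y Bm" and nonzero_matrix: "\<not> (\<forall>i\<in>{1..2}. \<forall>j\<in>{1..2}. Bm i j = 0)"
  shows "coprime_seed P splus 2 x y Bm"
proof -
  have indep: "alg_indep P 2 x" and y: "y 1 \<in> P" "y 2 \<in> P"
    using seed unfolding is_seed_def by auto
  have B: "Bm 1 1 = 0" "Bm 2 2 = 0" "Bm 1 2 = 0 \<longleftrightarrow> Bm 2 1 = 0"
    using seed skew_symmetrizable_2 unfolding is_seed_def by blast+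
  with nonzero_matrix have "Bm 1 2 \<noteq> 0" "Bm 2 1 \<noteq> 0"
    unfolding atLeastAtMost_1_2 by auto
  obtain T1 where T1: "exch_poly splus 2 1 x y Bm = poly T1 (x 2)" "\<forall>i. coeff T1 i \<in> ZP P" "coeff T1 0 \<in> P"
    using exch_poly_2_binomial[where k = 1 and l = 2 and x = x and y = y and Bm = Bm, OF y(1) _ B(1) \<open>Bm 2 1 \<noteq> 0\<close>]
    by auto
  obtain T2 where T2: "exch_poly splus 2 2 x y Bm = poly T2 (x 1)" "\<forall>i. coeff T2 i \<in> ZP P" "coeff T2 0 \<in> P"
    using exch_poly_2_binomial[where k = 2 and l = 1 and x = x and y = y and Bm = Bm, OF y(2) _ B(2) \<open>Bm 1 2 \<noteq> 0\<close>]
    by auto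
  note tr = alg_indep_transcendental_ZP[OF indep]
  have P_nonzero: "exch_poly splus 2 1 x y Bm \<noteq> 0" "exch_poly splus 2 2 x y Bm \<noteq> 0"
    and P_mem: "exch_poly splus 2 1 x y Bm \<in> ring_gen (P \<union> {x 2})"
      "exch_poly splus 2 2 x y Bm \<in> ring_gen (P \<union> {x 1})"
    unfolding T1(1) T2(1) using transcendental_poly_ZP[OF tr(2) T1(2)] transcendental_poly_ZP[OF tr(1) T2(2)]
      nonzero[OF T1(3)] nonzero[OF T2(3)] by blast+
  show ?thesis
    unfolding coprime_seed_def
  proof (intro ballI impI)
    fix k l d assume kl: "k \<in> {1..2}" "l \<in> {1..2}" "k \<noteq> l" and d: "d \<in> poly_ring P 2 x"
      and "\<exists>q\<in>poly_ring P 2 x. exch_poly splus 2 k x y Bm = d * q"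
      and "\<exists>q\<in>poly_ring P 2 x. exch_poly splus 2 l x y Bm = d * q"
    then obtain q1 q2 where q1: "q1 \<in> poly_ring P 2 x" "exch_poly splus 2 1 x y Bm = d * q1"
      and q2: "q2 \<in> poly_ring P 2 x" "exch_poly splus 2 2 x y Bm = d * q2"
      unfolding atLeastAtMost_1_2 by auto
    have "d \<in> ZP P" "q1 \<in> ring_gen (P \<union> {x 2})"
      using poly_ring_2_common_divisor[OF indep d q1(1) _ _ q2(1)] P_nonzero P_mem
      unfolding q1(2) q2(2) by simp_all
    moreover have "q1 \<in> adjoin (ZP P) (x 2)"
      using \<open>q1 \<in> ring_gen (P \<union> {x 2})\<close> ring_gen_insert_subset_adjoin_ZP by blast
    ultimately show "d \<in> P \<union> uminus ` P"
      using divisor_of_unit_constant_term[OF tr(2) _ _ T1(2,3)] q1(2) T1(1) by simp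
  qed
qed

lemma mutation_zero_matrix_invariant:
  assumes mutation: "is_mutation P splus 2 k x y Bm x' y' Bm'" and k: "k \<in> {1..2}"
    and y: "\<forall>i\<in>{1..2}. y i \<in> P" and zero: "\<forall>i\<in>{1..2}. \<forall>j\<in>{1..2}. Bm i j = 0"
  shows "\<forall>i\<in>{1..2}. exch_const splus (y' i) = exch_const splus (y i)"
    and "\<forall>i\<in>{1..2}. x' i = flip (i = k) (exch_const splus (y i)) (x i)"
  using mutation_zero_matrix[OF mutation k zero] exch_const_inverse y unfolding flip_def by auto

end

locale rank2_pattern = coefficient_semifield +
  fixes X Y and B :: "int \<Rightarrow> nat \<Rightarrow> nat \<Rightarrow> int"
  assumes pattern: "cluster_pattern2 P splus X Y B"
begin

lemma seed: "is_seed P 2 (X t) (Y t) (B t)"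
  using pattern unfolding cluster_pattern2_def by blast

lemma alg_indep_X: "alg_indep P 2 (X t)"
  using seed unfolding is_seed_def by blast

lemma Y_mem: "\<forall>i\<in>{1..2}. Y t i \<in> P"
  using seed unfolding is_seed_def by blast

lemma mutation_forward:
  "is_mutation P splus 2 (lab2 m) (X m) (Y m) (B m) (X (m + 1)) (Y (m + 1)) (B (m + 1))"
  using pattern unfolding cluster_pattern2_def by blast

lemma mutation_backward:
  "is_mutation P splus 2 (lab2 m) (X (m + 1)) (Y (m + 1)) (B (m + 1)) (X m) (Y m) (B m)"
  using pattern unfolding cluster_pattern2_def by blast

lemma coprime_unless_zero_matrix:
  "(\<forall>i\<in>{1..2}. \<forall>j\<in>{1..2}. B t i j = 0) \<or> coprime_seed P splus 2 (X t) (Y t) (B t)"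
  using coprime_seed_2[OF seed] by blast

end

locale zero_matrix_pattern = rank2_pattern +
  fixes t0 :: int
  assumes zero_matrix: "\<forall>i\<in>{1..2}. \<forall>j\<in>{1..2}. B t0 i j = 0"
begin

definition exch :: "nat \<Rightarrow> 'a" where
  "exch i = exch_const splus (Y t0 i)"

lemma zero_matrix_everywhere:
  "(\<forall>i\<in>{1..2}. \<forall>j\<in>{1..2}. B t i j = 0) \<and> (\<forall>i\<in>{1..2}. exch_const splus (Y t i) = exch i)"
proof (induction t rule: int_induct[where k = t0])
  case base
  then show ?case
    using zero_matrix unfolding exch_def by simp
next
  case (step1 m)
  then show ?case
    using mutation_zero_matrix_invariant(1)[OF mutation_forward lab2_mem Y_mem]
      mutation_zero_matrix(5)[OF mutation_forward lab2_mem] by simp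
next
  case (step2 m)
  then have "(\<forall>i\<in>{1..2}. \<forall>j\<in>{1..2}. B (m - 1 + 1) i j = 0)
      \<and> (\<forall>i\<in>{1..2}. exch_const splus (Y (m - 1 + 1) i) = exch i)"
    by simp
  then show ?case
    using mutation_zero_matrix_invariant(1)[OF mutation_backward lab2_mem Y_mem]
      mutation_zero_matrix(5)[OF mutation_backward lab2_mem] by simp
qed

lemma B_zero: "\<forall>i\<in>{1..2}. \<forall>j\<in>{1..2}. B t i j = 0"
  using zero_matrix_everywhere by blast

lemma exch_const_Y: "i \<in> {1..2} \<Longrightarrow> exch_const splus (Y t i) = exch i"
  using zero_matrix_everywhere by blast

lemma X_step:
  assumes i: "i \<in> {1..2}"
  shows "X (m + 1) i = flip (i = lab2 m) (exch i) (X m i)"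
    and "X m i = flip (i = lab2 m) (exch i) (X (m + 1) i)"
proof -
  show "X (m + 1) i = flip (i = lab2 m) (exch i) (X m i)"
    using bspec[OF mutation_zero_matrix_invariant(2)[OF mutation_forward lab2_mem Y_mem B_zero] i]
    unfolding exch_const_Y[OF i] .
  show "X m i = flip (i = lab2 m) (exch i) (X (m + 1) i)"
    using bspec[OF mutation_zero_matrix_invariant(2)[OF mutation_backward lab2_mem Y_mem B_zero] i]
    unfolding exch_const_Y[OF i] .
qed

lemma exch_ZP: "i \<in> {1..2} \<Longrightarrow> exch i \<in> ZP P"
  unfolding exch_def using exch_const_ZP Y_mem by blast

lemma exch_nonzero: "i \<in> {1..2} \<Longrightarrow> exch i \<noteq> 0"
  unfolding exch_def using exch_const_nonzero Y_mem by blast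

lemma X_nonzero: "i \<in> {1..2} \<Longrightarrow> X t i \<noteq> 0"
  using alg_indep_nonzero[OF alg_indep_X, of t] unfolding atLeastAtMost_1_2 by blast

lemma X_values:
  assumes i: "i \<in> {1..2}"
  shows "X t i = X t0 i \<or> X t i = exch i / X t0 i"
proof -
  have flip_closed: "flip s (exch i) z = X t0 i \<or> flip s (exch i) z = exch i / X t0 i"
    if "z = X t0 i \<or> z = exch i / X t0 i" for s z
    using that exch_nonzero[OF i] X_nonzero[OF i] unfolding flip_def by auto
  show ?thesis
  proof (induction t rule: int_induct[where k = t0])
    case (step1 m)
    then show ?case
      using flip_closed X_step(1)[OF i, of m] by simp
  next
    case (step2 m)
    then show ?case
      using flip_closed X_step(2)[OF i, of "m - 1"] by simp
  qed simp
qed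

lemma lab2_neighbours: "lab2 t0 = 1 \<and> lab2 (t0 - 1) = 2 \<or> lab2 t0 = 2 \<and> lab2 (t0 - 1) = 1"
  unfolding lab2_def by simp

lemma X_neighbours:
  assumes i: "i \<in> {1..2}"
  shows "X (t0 + 1) i = flip (i = lab2 t0) (exch i) (X t0 i)"
    and "X (t0 - 1) i = flip (i = lab2 (t0 - 1)) (exch i) (X t0 i)"
    and "X (t0 + 2) i = exch i / X t0 i"
proof -
  show "X (t0 + 1) i = flip (i = lab2 t0) (exch i) (X t0 i)"
    by (rule X_step(1)[OF i])
  show "X (t0 - 1) i = flip (i = lab2 (t0 - 1)) (exch i) (X t0 i)"
    using X_step(2)[OF i, of "t0 - 1"] by simp
  have alternate: "(i = lab2 (t0 + 1)) \<longleftrightarrow> (i \<noteq> lab2 t0)"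
    using i lab2_cases[of t0] unfolding atLeastAtMost_1_2 by (elim disjE conjE) auto
  have "X (t0 + 2) i = flip (i = lab2 (t0 + 1)) (exch i) (X (t0 + 1) i)"
    using X_step(1)[OF i, of "t0 + 1"] by (simp add: add.assoc)
  also have "\<dots> = flip (i \<noteq> lab2 t0) (exch i) (flip (i = lab2 t0) (exch i) (X t0 i))"
    unfolding alternate X_step(1)[OF i, of t0] ..
  also have "\<dots> = exch i / X t0 i"
    unfolding flip_def by simp
  finally show "X (t0 + 2) i = exch i / X t0 i" .
qed

lemma laurent_ring_X_flipped:
  "laurent_ring P 2 (X t0) = laurent_ring P 2 (flipped False False exch (X t0))"
  "laurent_ring P 2 (X (t0 + 1)) = laurent_ring P 2 (flipped (1 = lab2 t0) (2 = lab2 t0) exch (X t0))"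
  "laurent_ring P 2 (X (t0 - 1))
    = laurent_ring P 2 (flipped (1 = lab2 (t0 - 1)) (2 = lab2 (t0 - 1)) exch (X t0))"
  "laurent_ring P 2 (X (t0 + 2)) = laurent_ring P 2 (flipped True True exch (X t0))"
proof -
  note i = in_1_2
  show "laurent_ring P 2 (X t0) = laurent_ring P 2 (flipped False False exch (X t0))"
    "laurent_ring P 2 (X (t0 + 1)) = laurent_ring P 2 (flipped (1 = lab2 t0) (2 = lab2 t0) exch (X t0))"
    "laurent_ring P 2 (X (t0 - 1))
      = laurent_ring P 2 (flipped (1 = lab2 (t0 - 1)) (2 = lab2 (t0 - 1)) exch (X t0))"
    "laurent_ring P 2 (X (t0 + 2)) = laurent_ring P 2 (flipped True True exch (X t0))"
    by (rule laurent_ring_cong; unfold flipped_1_2 X_neighbours[OF i(1)] X_neighbours[OF i(2)];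
        simp add: flip_def)+
qed

definition generators :: "'a set" where
  "generators = P \<union> {X t0 1, X t0 2, exch 1 / X t0 1, exch 2 / X t0 2}"

lemma lower_bound2_eq: "lower_bound2 P X t0 = ring_gen generators"
proof -
  have "P \<union> X t0 ` {1..2} \<union> X (t0 - 1) ` {1..2} \<union> X (t0 + 1) ` {1..2} = generators"
    using lab2_neighbours
  proof (elim disjE conjE)
    assume "lab2 t0 = 1" "lab2 (t0 - 1) = 2"
    then show ?thesis
      unfolding generators_def image_1_2 X_neighbours[OF in_1_2(1)] X_neighbours[OF in_1_2(2)] flip_def
      by auto
  next
    assume "lab2 t0 = 2" "lab2 (t0 - 1) = 1"
    then show ?thesis
      unfolding generators_def image_1_2 X_neighbours[OF in_1_2(1)] X_neighbours[OF in_1_2(2)] flip_def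
      by auto
  qed
  then show ?thesis
    unfolding lower_bound2_def by simp
qed

lemma cluster_alg2_eq: "cluster_alg2 P X = ring_gen generators"
proof -
  have "X t i \<in> generators" if "i \<in> {1..2}" for t i
    using X_values[OF that, of t] that unfolding generators_def atLeastAtMost_1_2 by auto
  then have "{X t i | t i. i \<in> {1..2}} \<subseteq> generators"
    by blast
  moreover have mem: "X t i \<in> {X t i | t i. i \<in> {1..2}}" if "i \<in> {1..2}" for t i
    using that by blast
  have "{X t0 1, X t0 2, exch 1 / X t0 1, exch 2 / X t0 2} \<subseteq> {X t i | t i. i \<in> {1..2}}"
    using lab2_neighbours
  proof (elim disjE conjE)
    assume "lab2 t0 = 1" "lab2 (t0 - 1) = 2"
    then have "exch 1 / X t0 1 = X (t0 + 1) 1" "exch 2 / X t0 2 = X (t0 - 1) 2"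
      using X_neighbours[OF in_1_2(1)] X_neighbours[OF in_1_2(2)] by (simp_all add: flip_def)
    then show ?thesis
      using mem[OF in_1_2(1)] mem[OF in_1_2(2)] by (simp only: insert_subset) simp
  next
    assume "lab2 t0 = 2" "lab2 (t0 - 1) = 1"
    then have "exch 1 / X t0 1 = X (t0 - 1) 1" "exch 2 / X t0 2 = X (t0 + 1) 2"
      using X_neighbours[OF in_1_2(1)] X_neighbours[OF in_1_2(2)] by (simp_all add: flip_def)
    then show ?thesis
      using mem[OF in_1_2(1)] mem[OF in_1_2(2)] by (simp only: insert_subset) simp
  qed
  ultimately have "P \<union> {X t i | t i. i \<in> {1..2}} = generators"
    unfolding generators_def by blast
  then show ?thesis
    unfolding cluster_alg2_def by simp
qed

lemma generators_subset_laurent_ring: "generators \<subseteq> laurent_ring P 2 (X t)"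
proof -
  let ?L = "laurent_ring P 2 (X t)"
  have "X t0 i \<in> ?L \<and> exch i / X t0 i \<in> ?L" if i: "i \<in> {1..2}" for i
  proof -
    have "exch i * inverse (X t i) \<in> ?L"
      using subsetD[OF ZP_subset_laurent_ring exch_ZP[OF i]] laurent_ring_var(2)[OF i]
      by (rule subring_mult[OF laurent_ring_subring])
    moreover have "X t i \<in> ?L"
      by (rule laurent_ring_var(1)[OF i])
    ultimately show ?thesis
    proof (cases "X t i = X t0 i")
      case False
      then have "X t i = exch i / X t0 i"
        using X_values[OF i, of t] by blast
      moreover from this have "X t0 i = exch i * inverse (X t i)"
        using exch_nonzero[OF i] X_nonzero[OF i] by (simp add: field_simps)
      ultimately show ?thesis
        using \<open>X t i \<in> ?L\<close> \<open>exch i * inverse (X t i) \<in> ?L\<close> by simp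
    qed (simp add: divide_inverse)
  qed
  moreover have "P \<subseteq> ?L"
    using ZP_superset ZP_subset_laurent_ring by blast
  ultimately show ?thesis
    unfolding generators_def using in_1_2 by blast
qed

lemma flipped_laurent_rings:
  "laurent_ring P 2 (flipped s1 s2 exch (X t0))
    \<in> {laurent_ring P 2 (X t0), laurent_ring P 2 (X (t0 + 1)), laurent_ring P 2 (X (t0 - 1)),
       laurent_ring P 2 (X (t0 + 2))}"
  using lab2_neighbours unfolding laurent_ring_X_flipped
  by (elim disjE conjE) (cases s1; cases s2; simp)+

lemma upper_cluster_alg2_eq: "upper_cluster_alg2 P X = ring_gen generators"
proof
  show "ring_gen generators \<subseteq> upper_cluster_alg2 P X"
    unfolding upper_cluster_alg2_def
    using ring_gen_minimal[OF generators_subset_laurent_ring laurent_ring_subring] by blast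
  show "upper_cluster_alg2 P X \<subseteq> ring_gen generators"
  proof
    fix f assume "f \<in> upper_cluster_alg2 P X"
    then have "f \<in> laurent_ring P 2 (flipped s1 s2 exch (X t0))" for s1 s2
      using flipped_laurent_rings[of s1 s2] unfolding upper_cluster_alg2_def by blast
    then show "f \<in> ring_gen generators"
      unfolding generators_def
      using laurent_rings_flipped_Inter[OF alg_indep_X exch_ZP[OF in_1_2(1)] exch_ZP[OF in_1_2(2)]
          exch_nonzero[OF in_1_2(1)] exch_nonzero[OF in_1_2(2)]] by blast
  qed
qed

lemma common_factor_of_exch:
  assumes "\<not> coprime_seed P splus 2 (X t0) (Y t0) (B t0)"
  obtains d q1 q2 where "d \<in> ZP P" "q1 \<in> ZP P" "q2 \<in> ZP P" "exch 1 = d * q1" "exch 2 = d * q2"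
    "d \<notin> P \<union> uminus ` P"
proof -
  have exch_poly: "exch_poly splus 2 i (X t0) (Y t0) (B t0) = exch i" if "i \<in> {1..2}" for i
    unfolding exch_def by (rule exch_poly_zero_matrix[OF zero_matrix that])
  obtain k l d where kl: "k \<in> {1..2}" "l \<in> {1..2}" "k \<noteq> l" and d: "d \<in> poly_ring P 2 (X t0)"
    and "\<exists>q\<in>poly_ring P 2 (X t0). exch_poly splus 2 k (X t0) (Y t0) (B t0) = d * q"
    and "\<exists>q\<in>poly_ring P 2 (X t0). exch_poly splus 2 l (X t0) (Y t0) (B t0) = d * q"
    and not_unit: "d \<notin> P \<union> uminus ` P"
    using assms unfolding coprime_seed_def by blast
  then have "\<exists>q\<in>poly_ring P 2 (X t0). exch i = d * q" if "i \<in> {1..2}" for i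
    using that exch_poly unfolding atLeastAtMost_1_2 by auto
  then obtain q1 q2 where q1: "q1 \<in> poly_ring P 2 (X t0)" "exch 1 = d * q1"
    and q2: "q2 \<in> poly_ring P 2 (X t0)" "exch 2 = d * q2"
    using in_1_2 by metis
  have "d \<in> ZP P" "q1 \<in> ZP P"
    using poly_ring_2_factors_in_ZP[OF alg_indep_X d q1(1)] q1(2) exch_ZP[OF in_1_2(1)]
      exch_nonzero[OF in_1_2(1)] by simp_all
  moreover have "q2 \<in> ZP P"
    using poly_ring_2_factors_in_ZP[OF alg_indep_X d q2(1)] q2(2) exch_ZP[OF in_1_2(2)]
      exch_nonzero[OF in_1_2(2)] by simp_all
  ultimately show ?thesis
    using that q1(2) q2(2) not_unit by blast
qed

lemma witness_in_flipped_laurent_rings: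
  assumes ZP: "d \<in> ZP P" "q1 \<in> ZP P" "q2 \<in> ZP P" and factors: "exch 1 = d * q1" "exch 2 = d * q2"
    and "\<not> (s1 \<and> s2)"
  shows "d * q1 * q2 / (X t0 1 * X t0 2) \<in> laurent_ring P 2 (flipped s1 s2 exch (X t0))"
proof -
  let ?L = "laurent_ring P 2 (flipped s1 s2 exch (X t0))"
  let ?z1 = "flip s1 (exch 1) (X t0 1)" and ?z2 = "flip s2 (exch 2) (X t0 2)"
  have Z: "d \<in> ?L" "q1 \<in> ?L" "q2 \<in> ?L"
    using ZP ZP_subset_laurent_ring by blast+
  have gens: "?z1 \<in> ?L" "?z2 \<in> ?L" "inverse ?z1 \<in> ?L" "inverse ?z2 \<in> ?L"
    using laurent_ring_gens[of "flipped s1 s2 exch (X t0)" P] unfolding flipped_1_2 .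
  have x: "X t0 1 \<noteq> 0" "X t0 2 \<noteq> 0"
    using X_nonzero in_1_2 by blast+
  note mult = subring_mult[OF laurent_ring_subring]
  consider "\<not> s1" "\<not> s2" | "s1" "\<not> s2" | "\<not> s1" "s2"
    using \<open>\<not> (s1 \<and> s2)\<close> by blast
  then show ?thesis
  proof cases
    case 1
    then have "d * q1 * q2 / (X t0 1 * X t0 2) = d * q1 * q2 * inverse ?z1 * inverse ?z2"
      by (simp add: flip_def field_simps)
    then show ?thesis
      using Z gens by (simp add: mult)
  next
    case 2
    then have "d * q1 * q2 / (X t0 1 * X t0 2) = ?z1 * q2 * inverse ?z2"
      using factors x by (simp add: flip_def field_simps)
    then show ?thesis
      using Z gens by (simp add: mult)
  next
    case 3
    then have "d * q1 * q2 / (X t0 1 * X t0 2) = q1 * inverse ?z1 * ?z2"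
      using factors x by (simp add: flip_def field_simps)
    then show ?thesis
      using Z gens by (simp add: mult)
  qed
qed

lemma witness_not_in_laurent_ring:
  assumes d: "d \<in> ZP P" "d \<notin> P \<union> uminus ` P" and factors: "exch 1 = d * q1" "exch 2 = d * q2"
  shows "d * q1 * q2 / (X t0 1 * X t0 2) \<notin> laurent_ring P 2 (X (t0 + 2))"
proof
  assume "d * q1 * q2 / (X t0 1 * X t0 2) \<in> laurent_ring P 2 (X (t0 + 2))"
  moreover have "d \<noteq> 0"
    using factors(1) exch_nonzero[OF in_1_2(1)] by auto
  moreover have "d * q1 * q2 / (X t0 1 * X t0 2) = inverse d * (X (t0 + 2) 1 * X (t0 + 2) 2)"
    using \<open>d \<noteq> 0\<close> unfolding X_neighbours(3)[OF in_1_2(1)] X_neighbours(3)[OF in_1_2(2)] factors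
    by (simp add: field_simps)
  ultimately obtain e where "e \<in> ZP P" "d * e = 1"
    using laurent_ring_monomial_quotient[where z = "X (t0 + 2)", OF alg_indep_imp_alg_indep_pair[OF alg_indep_X] d(1)]
    by auto
  then show False
    using ZP_units[OF d(1)] d(2) by blast
qed

lemma upper_cluster_alg2_psubset:
  assumes "\<not> coprime_seed P splus 2 (X t0) (Y t0) (B t0)"
  shows "upper_cluster_alg2 P X \<subset> upper_bound2 P X t0"
proof -
  obtain d q1 q2 where dq: "d \<in> ZP P" "q1 \<in> ZP P" "q2 \<in> ZP P" "exch 1 = d * q1" "exch 2 = d * q2"
    and not_unit: "d \<notin> P \<union> uminus ` P"
    using common_factor_of_exch[OF assms] by blast
  have "d * q1 * q2 / (X t0 1 * X t0 2) \<in> laurent_ring P 2 (flipped s1 s2 exch (X t0))"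
    if "\<not> (s1 \<and> s2)" for s1 s2
    using witness_in_flipped_laurent_rings[OF dq that] .
  then have "d * q1 * q2 / (X t0 1 * X t0 2) \<in> upper_bound2 P X t0"
    using lab2_neighbours unfolding upper_bound2_def laurent_ring_X_flipped
    by (elim disjE conjE) simp_all
  moreover have "d * q1 * q2 / (X t0 1 * X t0 2) \<notin> upper_cluster_alg2 P X"
    using witness_not_in_laurent_ring[OF dq(1) not_unit dq(4,5)] unfolding upper_cluster_alg2_def by blast
  moreover have "upper_cluster_alg2 P X \<subseteq> upper_bound2 P X t0"
    unfolding upper_cluster_alg2_def upper_bound2_def by blast
  ultimately show ?thesis
    by blast
qed

end

theorem proposition5p9:
  fixes P :: "'f::field set" and splus :: "'f \<Rightarrow> 'f \<Rightarrow> 'f"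
    and X :: "int \<Rightarrow> nat \<Rightarrow> 'f" and Y :: "int \<Rightarrow> nat \<Rightarrow> 'f"
    and B :: "int \<Rightarrow> nat \<Rightarrow> nat \<Rightarrow> int" and t0 :: int
  assumes "semifield_in P splus"
    and "group_ring_embedded P"
    and "cluster_pattern2 P splus X Y B"
    and "\<not> coprime_seed P splus 2 (X t0) (Y t0) (B t0)"
  shows "lower_bound2 P X t0 = cluster_alg2 P X
       \<and> cluster_alg2 P X = upper_cluster_alg2 P X
       \<and> upper_cluster_alg2 P X \<subset> upper_bound2 P X t0"
proof -
  interpret rank2_pattern P splus X Y B
    using assms(1-3) by unfold_locales
  have "\<forall>i\<in>{1..2}. \<forall>j\<in>{1..2}. B t0 i j = 0"
    using coprime_unless_zero_matrix[of t0] assms(4) by blast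
  then interpret zero_matrix_pattern P splus X Y B t0
    by unfold_locales
  show ?thesis
    using lower_bound2_eq cluster_alg2_eq upper_cluster_alg2_eq upper_cluster_alg2_psubset[OF assms(4)]
    by simp
qed

end
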